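(* Let $\alpha\in[1,\infty)$, let $n\ge 1$, and let $a_1,\dots,a_n\in\mathbb{R}^2$ be distinct points with masses $m_1,\dots,m_n>0$ forming a relative equilibrium, i.e. $a_i=\sum_{j\neq i} m_j\,\frac{a_i-a_j}{\|a_i-a_j\|^{\alpha+1}}$ for every $i$. Consider the planar potential $$V(x)=\frac{\|x\|^2}{2}+\sum_{j=1}^n m_j\,\phi_\alpha(\|x-a_j\|),\qquad x\in\mathbb{R}^2\setminus\{a_1,\dots,a_n\}.$$ Then $V$ has no local maximum points. Moreover, if $V$ is a Morse function (all its critical points are nondegenerate), then $$\#\{\text{saddle points of }V\}=n-1+\#\{\text{minimum points of }V\},$$ and, since $V$ has a global minimum, $V$ has at least $n$ saddle points.
   Context: $\phi_\alpha:(0,\infty)\to\mathbb{R}$ is a function with $\phi_\alpha'(r)=-1/r^{\alpha}$ (for $\alpha=2$ this is the gravitational potential $1/r$). This $V$ is the restriction to the plane of the potential governing a satellite attracted by the $n$ primaries in a frame rotating with angular speed $1$; its critical points are the planar equilibria of the satellite. *)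

theory Defs
  imports "HOL-Analysis.Analysis"
begin

text \<open>Points of the plane are elements of real^2. The n primaries are indexed by
  i < n (i.e. a 0, ..., a (n-1)).\<close>

definition primaries_domain :: "nat \<Rightarrow> (nat \<Rightarrow> real^2) \<Rightarrow> (real^2) set" where
  "primaries_domain n a = UNIV - a ` {..<n}"

definition planar_potential ::
  "(real \<Rightarrow> real) \<Rightarrow> nat \<Rightarrow> (nat \<Rightarrow> real) \<Rightarrow> (nat \<Rightarrow> real^2) \<Rightarrow> real^2 \<Rightarrow> real" where
  "planar_potential phi n m a x =
     (norm x)^2 / 2 + (\<Sum>j<n. m j * phi (norm (x - a j)))"

definition relative_equilibrium ::
  "real \<Rightarrow> nat \<Rightarrow> (nat \<Rightarrow> real) \<Rightarrow> (nat \<Rightarrow> real^2) \<Rightarrow> bool" where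
  "relative_equilibrium \<alpha> n m a \<longleftrightarrow>
     (\<forall>i<n. a i = (\<Sum>j\<in>{..<n} - {i}.
        (m j / (norm (a i - a j) powr (\<alpha> + 1))) *\<^sub>R (a i - a j)))"

definition local_max_point :: "(real^2 \<Rightarrow> real) \<Rightarrow> (real^2) set \<Rightarrow> real^2 \<Rightarrow> bool" where
  "local_max_point f S x \<longleftrightarrow> x \<in> S \<and> (\<exists>e>0. \<forall>y\<in>S. dist y x < e \<longrightarrow> f y \<le> f x)"

definition local_min_point :: "(real^2 \<Rightarrow> real) \<Rightarrow> (real^2) set \<Rightarrow> real^2 \<Rightarrow> bool" where
  "local_min_point f S x \<longleftrightarrow> x \<in> S \<and> (\<exists>e>0. \<forall>y\<in>S. dist y x < e \<longrightarrow> f x \<le> f y)"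

definition global_min_point :: "(real^2 \<Rightarrow> real) \<Rightarrow> (real^2) set \<Rightarrow> real^2 \<Rightarrow> bool" where
  "global_min_point f S x \<longleftrightarrow> x \<in> S \<and> (\<forall>y\<in>S. f x \<le> f y)"

definition critical_point :: "(real^2 \<Rightarrow> real) \<Rightarrow> (real^2) set \<Rightarrow> real^2 \<Rightarrow> bool" where
  "critical_point f S x \<longleftrightarrow> x \<in> S \<and> (f has_derivative (\<lambda>h. 0)) (at x)"

definition nondegenerate_critical_point ::
  "(real^2 \<Rightarrow> real) \<Rightarrow> (real^2) set \<Rightarrow> real^2 \<Rightarrow> bool" where
  "nondegenerate_critical_point f S x \<longleftrightarrow> critical_point f S x \<and>
     (\<exists>U g H. open U \<and> x \<in> U \<and> U \<subseteq> S \<and>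
        (\<forall>y\<in>U. (f has_derivative (\<lambda>h. g y \<bullet> h)) (at y)) \<and>
        (g has_derivative H) (at x) \<and> (\<forall>h. H h = 0 \<longrightarrow> h = 0))"

definition is_morse_on :: "(real^2 \<Rightarrow> real) \<Rightarrow> (real^2) set \<Rightarrow> bool" where
  "is_morse_on f S \<longleftrightarrow> (\<forall>x. critical_point f S x \<longrightarrow> nondegenerate_critical_point f S x)"

definition saddle_point :: "(real^2 \<Rightarrow> real) \<Rightarrow> (real^2) set \<Rightarrow> real^2 \<Rightarrow> bool" where
  "saddle_point f S x \<longleftrightarrow> critical_point f S x \<and>
     \<not> local_min_point f S x \<and> \<not> local_max_point f S x"

end

theory Submission
  imports Defs "HOL-Complex_Analysis.Winding_Numbers"
begin

text \<open>Identify the plane with \<complex>. The gradient of V is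
  grad z = z - \<Sum>j m j |z - a j|^(-(\<alpha>+1)) (z - a j), and its derivative has the form
  h \<mapsto> P z h + Q z (cnj h) with P z \<ge> 1 (this uses \<alpha> \<ge> 1), so the Hessian has eigenvalues
  P z \<plusminus> |Q z|. Hence V has no local maximum, and a nondegenerate critical point is a minimum
  (P > |Q|, index +1 as a zero of grad) or a saddle (P < |Q|, index -1).
  Near a primary, grad behaves like -(z - a j), a pole of index +1, and on a large square it
  makes an acute angle with z, so it winds once around 0 there. Cutting the square into
  rectangles around the finitely many zeros and poles of grad gives
  n + #minima - #saddles = 1. Finally V tends to +\<infinity> at infinity and at the primaries
  (phi r \<ge> phi 1 - ln r for r \<le> 1, again by \<alpha> \<ge> 1), so it attains a global minimum, and there
  are at least n saddles.\<close>

section \<open>Calculus and winding numbers in the complex plane\<close>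

lemma inner_scaleR_self_complex:
  fixes h d :: complex
  shows "(h \<bullet> d) *\<^sub>R d = (of_real ((norm d)^2) * h + d^2 * cnj h) / 2"
  unfolding complex_eq_iff
  by (simp add: inner_complex_def cmod_power2) (simp add: power2_eq_square algebra_simps)

lemma has_derivative_norm_diff:
  fixes z c :: "'a::real_inner"
  assumes "z \<noteq> c"
  shows "((\<lambda>z. norm (z - c)) has_derivative (\<lambda>h. (h \<bullet> (z - c)) / norm (z - c))) (at z)"
proof -
  have "((\<lambda>z. norm (z - c)) has_derivative (\<lambda>h. h \<bullet> sgn (z - c))) (at z)"
    using has_derivative_norm[of "z - c"] assms
    by (auto intro!: derivative_eq_intros has_derivative_compose[of "\<lambda>z. z - c" _ _ _ norm]
        simp: gderiv_def)
  moreover have "(\<lambda>h. h \<bullet> sgn (z - c)) = (\<lambda>h. (h \<bullet> (z - c)) / norm (z - c))"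
    by (simp add: sgn_div_norm inner_commute divide_inverse mult.commute)
  ultimately show ?thesis by simp
qed

lemma has_derivative_radial_field:
  fixes c z :: complex and k s :: real
  assumes "z \<noteq> c"
  defines "r \<equiv> norm (z - c)"
  shows "((\<lambda>z. (k * norm (z - c) powr s) *\<^sub>R (z - c)) has_derivative
     (\<lambda>h. of_real (k * r powr s * (1 + s/2)) * h
        + of_real (k * r powr s * s / (2 * r^2)) * (z - c)^2 * cnj h)) (at z)"
proof -
  have r: "r > 0" using assms by simp
  have dp: "((\<lambda>z. norm (z - c) powr s) has_derivative
      (\<lambda>h. r powr s * (0 * ln r + (h \<bullet> (z - c)) / r * s / r))) (at z)"
    unfolding r_def
    by (rule has_derivative_powr[OF has_derivative_norm_diff[OF assms(1)]])
      (use assms in \<open>auto intro!: derivative_eq_intros\<close>)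
  have dd: "((\<lambda>z. z - c) has_derivative (\<lambda>h. h)) (at z)"
    by (auto intro!: derivative_eq_intros)
  have "((\<lambda>z. (k * norm (z - c) powr s) *\<^sub>R (z - c)) has_derivative
     (\<lambda>h. (k * (r powr s * (0 * ln r + (h \<bullet> (z - c)) / r * s / r))) *\<^sub>R (z - c)
        + (k * r powr s) *\<^sub>R h)) (at z)"
    using has_derivative_scaleR[OF has_derivative_mult_right[OF dp, of k] dd]
    by (simp add: r_def add.commute)
  moreover have "(k * (r powr s * (0 * ln r + (h \<bullet> (z - c)) / r * s / r))) *\<^sub>R (z - c)
        + (k * r powr s) *\<^sub>R h
      = of_real (k * r powr s * (1 + s/2)) * h
        + of_real (k * r powr s * s / (2 * r^2)) * (z - c)^2 * cnj h" for h
  proof -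
    have "(k * (r powr s * (0 * ln r + (h \<bullet> (z - c)) / r * s / r))) *\<^sub>R (z - c)
        = (k * r powr s * s / r^2) *\<^sub>R ((h \<bullet> (z - c)) *\<^sub>R (z - c))"
      by (simp add: power2_eq_square)
    also have "\<dots> = (k * r powr s * s / r^2) *\<^sub>R ((of_real (r^2) * h + (z - c)^2 * cnj h) / 2)"
      by (simp add: inner_scaleR_self_complex r_def)
    finally have e: "(k * (r powr s * (0 * ln r + (h \<bullet> (z - c)) / r * s / r))) *\<^sub>R (z - c)
        = (k * r powr s * s / r^2) *\<^sub>R ((of_real (r^2) * h + (z - c)^2 * cnj h) / 2)" .
    have "(k * p * s / r^2) *\<^sub>R ((of_real (r^2) * h + d^2 * cnj h) / 2) + (k * p) *\<^sub>R h
        = of_real (k * p * (1 + s/2)) * h + of_real (k * p * s / (2 * r^2)) * d^2 * cnj h"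
      for p :: real and d :: complex
      using r by (simp add: scaleR_conv_of_real field_simps)
    then show ?thesis unfolding e .
  qed
  ultimately show ?thesis by simp
qed

lemma homotopic_loops_continuous_image:
  assumes "homotopic_loops S p q" "continuous_on S f" "f ` S \<subseteq> T"
  shows "homotopic_loops T (f \<circ> p) (f \<circ> q)"
proof -
  have "homotopic_with_canon (\<lambda>r. pathfinish (f \<circ> r) = pathstart (f \<circ> r)) {0..1} S p q"
    using assms(1) unfolding homotopic_loops_def
    by (rule homotopic_with_mono) (simp add: pathfinish_def pathstart_def)
  from homotopic_with_compose_continuous_left[OF this assms(2)] assms(3)
  show ?thesis unfolding homotopic_loops_def by (auto simp: Pi_iff)
qed

lemma homotopic_paths_continuous_image:
  assumes "homotopic_paths S p q" "continuous_on S f" "f ` S \<subseteq> T"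
  shows "homotopic_paths T (f \<circ> p) (f \<circ> q)"
proof -
  have "homotopic_with_canon (\<lambda>r. pathstart (f \<circ> r) = pathstart (f \<circ> p)
      \<and> pathfinish (f \<circ> r) = pathfinish (f \<circ> p)) {0..1} S p q"
    using assms(1) unfolding homotopic_paths_def
    by (rule homotopic_with_mono) (simp add: pathfinish_def pathstart_def)
  then have "homotopic_with_canon (\<lambda>r. pathstart r = pathstart (f \<circ> p)
      \<and> pathfinish r = pathfinish (f \<circ> p)) {0..1} T (f \<circ> p) (f \<circ> q)"
    by (rule homotopic_with_compose_continuous_left[OF _ assms(2)]) (use assms(3) in auto)
  then show ?thesis unfolding homotopic_paths_def .
qed

lemma zero_notin_segment_if_inner_pos:
  fixes a b :: "'a::real_inner"
  assumes "a \<bullet> b > 0"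
  shows "0 \<notin> closed_segment a b"
proof
  assume "0 \<in> closed_segment a b"
  then obtain u where u: "0 \<le> u" "u \<le> 1" "(1 - u) *\<^sub>R a + u *\<^sub>R b = 0"
    unfolding closed_segment_def by auto
  then have "(1 - u) * (a \<bullet> b) + u * (b \<bullet> b) = 0"
    by (metis inner_add_left inner_scaleR_left inner_zero_left)
  moreover have "b \<bullet> b > 0" using assms by auto
  ultimately show False using u assms
    by (smt (verit) mult_nonneg_nonneg mult_pos_pos)
qed

lemma winding_number_mult_const:
  assumes "path g" "pathfinish g = pathstart g" "0 \<notin> path_image g" "q \<noteq> 0"
  shows "winding_number (\<lambda>t. q * g t) 0 = winding_number g 0"
proof -
  have "homotopic_loops (-{0}) g (\<lambda>t. q * g t)"
    unfolding homotopic_loops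
  proof (intro exI[of _ "\<lambda>(s,t). exp (of_real s * Ln q) * g t"] conjI ballI)
    show "continuous_on ({0..1} \<times> {0..1}) (\<lambda>(s,t). exp (of_real s * Ln q) * g t)"
      using assms(1) unfolding path_def
      by (auto intro!: continuous_intros continuous_on_compose2[of "{0..1}" g] simp: case_prod_unfold)
    show "(\<lambda>(s,t). exp (of_real s * Ln q) * g t) \<in> {0..1} \<times> {0..1} \<rightarrow> - {0}"
      using assms(3) by (auto simp: path_image_def)
    show "\<And>t. t \<in> {0..1} \<Longrightarrow> pathfinish ((\<lambda>(s,t). exp (of_real s * Ln q) * g t) \<circ> Pair t) =
          pathstart ((\<lambda>(s,t). exp (of_real s * Ln q) * g t) \<circ> Pair t)"
      using assms(2) by (simp add: pathfinish_def pathstart_def)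
  qed (use assms(4) in auto)
  then show ?thesis using winding_number_homotopic_loops by metis
qed

lemma exists_unit_conj_inner:
  fixes q :: complex and \<sigma> :: real
  assumes "\<sigma> = 1 \<or> \<sigma> = -1"
  shows "\<exists>v. norm v = 1 \<and> (q * cnj v) \<bullet> v = \<sigma> * norm q"
proof (cases "q = 0")
  case True then show ?thesis by (intro exI[of _ 1]) simp
next
  case False
  define v where "v = csqrt (of_real \<sigma> * q / of_real (norm q))"
  have "norm v = 1" using False assms by (auto simp: v_def norm_divide norm_mult)
  moreover have "(q * cnj v) \<bullet> v = Re (cnj q * v^2)"
    by (simp add: inner_complex_def power2_eq_square algebra_simps)
  moreover have "cnj q * v^2 = of_real \<sigma> * (q * cnj q) / of_real (norm q)"
    by (simp add: v_def algebra_simps)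
  then have "cnj q * v^2 = of_real (\<sigma> * norm q)"
    using False by (simp add: complex_norm_square[symmetric] power2_eq_square)
  ultimately show ?thesis by (intro exI[of _ v]) simp
qed

lemma exists_between_notin_finite:
  fixes a b :: real
  assumes "a < b" "finite S"
  obtains t where "a < t" "t < b" "t \<notin> S"
proof -
  have "infinite ({a<..<b} - S)" using assms by simp
  then obtain t where "t \<in> {a<..<b} - S" by (metis finite.emptyI ex_in_conv)
  then show ?thesis using that by auto
qed

lemma norm_diff_le_in_cbox_complex:
  fixes x y u w :: complex
  assumes "x \<in> cbox u w" "y \<in> cbox u w"
  shows "norm (x - y) \<le> (Re w - Re u) + (Im w - Im u)"
proof -
  have "norm (x - y) \<le> \<bar>Re (x - y)\<bar> + \<bar>Im (x - y)\<bar>" by (rule cmod_le)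
  also have "\<dots> \<le> (Re w - Re u) + (Im w - Im u)"
    using assms by (auto simp: in_cbox_complex_iff abs_le_iff intro!: add_mono)
  finally show ?thesis .
qed

lemma path_image_rectpath_eq_segments:
  "path_image (rectpath u w) =
     closed_segment u (Complex (Re w) (Im u)) \<union> closed_segment (Complex (Re w) (Im u)) w
     \<union> closed_segment w (Complex (Re u) (Im w)) \<union> closed_segment (Complex (Re u) (Im w)) u"
  unfolding rectpath_def Let_def by (simp add: path_image_join Un_assoc)

definition shrink_loop :: "'a::real_vector \<Rightarrow> real \<Rightarrow> (real \<Rightarrow> 'a) \<Rightarrow> real \<Rightarrow> 'a" where
  "shrink_loop c s g = (\<lambda>t. c + s *\<^sub>R (g t - c))"

lemma path_shrink_loop:
  fixes g :: "real \<Rightarrow> 'a::real_normed_vector"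
  assumes "path g" "pathfinish g = pathstart g"
  shows "path (shrink_loop c s g)" "pathfinish (shrink_loop c s g) = pathstart (shrink_loop c s g)"
  using assms unfolding shrink_loop_def path_def pathfinish_def pathstart_def
  by (auto intro!: continuous_intros)

lemma closed_segment_shrink_subset:
  fixes q c :: "'a::real_vector"
  assumes "x \<in> closed_segment q (c + s *\<^sub>R (q - c))" "0 < s" "s \<le> 1"
  shows "x \<in> closed_segment c q" "q \<noteq> c \<Longrightarrow> x \<noteq> c"
proof -
  obtain l where l: "0 \<le> l" "l \<le> 1" "x = (1 - l) *\<^sub>R q + l *\<^sub>R (c + s *\<^sub>R (q - c))"
    using assms(1) unfolding closed_segment_def by auto
  define \<mu> where "\<mu> = 1 - l + l * s"
  have "l * s \<le> l" "l * s \<ge> 0" using l assms by (simp_all add: mult_left_le)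
  then have mu: "0 < \<mu>" "\<mu> \<le> 1" unfolding \<mu>_def using l assms
    by (auto, smt (verit) mult_pos_pos)
  have x: "x = (1 - \<mu>) *\<^sub>R c + \<mu> *\<^sub>R q"
    unfolding l(3) \<mu>_def by (simp add: algebra_simps)
  show "x \<in> closed_segment c q" unfolding closed_segment_def using mu x by auto
  show "x \<noteq> c" if "q \<noteq> c"
  proof
    assume "x = c"
    then have "\<mu> *\<^sub>R (q - c) = 0" using x by (simp add: algebra_simps)
    then show False using mu that by simp
  qed
qed

lemma homotopic_loops_shrink_loop:
  fixes g :: "real \<Rightarrow> 'a::real_normed_vector"
  assumes K: "convex K" "c \<in> K" and g: "path g" "pathfinish g = pathstart g" "path_image g \<subseteq> K - {c}"
    and s: "0 < s" "s \<le> 1"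
  shows "homotopic_loops (K - {c}) g (shrink_loop c s g)"
proof (rule homotopic_loops_linear)
  fix t :: real assume t: "t \<in> {0..1}"
  have "g t \<in> path_image g" using t by (simp add: path_image_def)
  then have gt: "g t \<in> K" "g t \<noteq> c" using g(3) by blast+
  show "closed_segment (g t) (shrink_loop c s g t) \<subseteq> K - {c}"
  proof
    fix x assume "x \<in> closed_segment (g t) (shrink_loop c s g t)"
    then have "x \<in> closed_segment c (g t)" "x \<noteq> c"
      using closed_segment_shrink_subset[of x "g t" c s] s gt(2) by (auto simp: shrink_loop_def)
    then show "x \<in> K - {c}" using K gt(1) by (meson DiffI convex_contains_segment singletonD subsetD)
  qed
qed (use g path_shrink_loop[OF g(1,2)] in auto)

lemma norm_shrink_loop: "0 \<le> s \<Longrightarrow> norm (shrink_loop c s g t - c) = s * norm (g t - c)"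
  by (simp add: shrink_loop_def)

lemma winding_number_linear_image:
  assumes "path g" "pathfinish g = pathstart g" "c \<notin> path_image g" "k \<noteq> 0"
  shows "winding_number (\<lambda>t. k * (g t - c)) 0 = winding_number g c"
proof -
  have "path (\<lambda>t. g t - c)" using assms(1) unfolding path_def by (intro continuous_intros)
  moreover have "0 \<notin> path_image (\<lambda>t. g t - c)" using assms(3) by (auto simp: path_image_def)
  ultimately show ?thesis
    using winding_number_mult_const[of "\<lambda>t. g t - c" k] assms(2,4) winding_number_offset[of g c]
    by (simp add: pathfinish_def pathstart_def)
qed

lemma winding_number_conj_linear_image:
  assumes "path g" "pathfinish g = pathstart g" "c \<notin> path_image g" "k \<noteq> 0"
  shows "winding_number (\<lambda>t. k * cnj (g t - c)) 0 = - cnj (winding_number g c)"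
proof -
  define h where "h = cnj \<circ> (\<lambda>t. g t - c)"
  have p: "path (\<lambda>t. g t - c)" using assms(1) unfolding path_def by (intro continuous_intros)
  have i: "0 \<notin> path_image (\<lambda>t. g t - c)" using assms(3) by (auto simp: path_image_def)
  have "path h" using assms(1) unfolding h_def path_def o_def by (intro continuous_intros)
  moreover have "pathfinish h = pathstart h" using assms(2) by (simp add: h_def pathfinish_def pathstart_def)
  moreover have "0 \<notin> path_image h" using i by (auto simp: h_def path_image_def)
  ultimately have "winding_number (\<lambda>t. k * h t) 0 = winding_number h 0"
    using assms(4) by (rule winding_number_mult_const)
  also have "winding_number h 0 = - cnj (winding_number g c)"
    using winding_number_cnj[OF p i] winding_number_offset[of g c] by (simp add: h_def)
  finally show ?thesis by (simp add: h_def)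
qed

section \<open>Winding numbers of a planar field along rectangles\<close>

text \<open>Nothing is assumed about f on S, which may contain poles as well as zeros of f.\<close>

locale planar_field =
  fixes f :: "complex \<Rightarrow> complex" and S :: "complex set"
  assumes finite_S: "finite S"
    and continuous_off_S: "continuous_on (- S) f"
    and nonzero_off_S: "\<And>z. z \<notin> S \<Longrightarrow> f z \<noteq> 0"
begin

definition seg_wind :: "complex \<Rightarrow> complex \<Rightarrow> complex" where
  "seg_wind x y = winding_number (f \<circ> linepath x y) 0"

definition rect_wind :: "complex \<Rightarrow> complex \<Rightarrow> complex" where
  "rect_wind u w = winding_number (f \<circ> rectpath u w) 0"

lemma continuous_on_off_S: "T \<inter> S = {} \<Longrightarrow> continuous_on T f"
  using continuous_off_S by (rule continuous_on_subset) blast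

lemma image_off_S: "T \<inter> S = {} \<Longrightarrow> f ` T \<subseteq> - {0}"
  using nonzero_off_S by force

lemma path_compose_off_S:
  assumes "path g" "path_image g \<inter> S = {}"
  shows "path (f \<circ> g)" "0 \<notin> path_image (f \<circ> g)"
proof -
  show "path (f \<circ> g)"
    using assms continuous_on_off_S unfolding path_def path_image_def
    by (intro continuous_on_compose) auto
  show "0 \<notin> path_image (f \<circ> g)"
    using assms(2) nonzero_off_S by (force simp: path_image_compose)
qed

lemma path_compose_linepath_off_S:
  assumes "closed_segment x y \<inter> S = {}"
  shows "path (f \<circ> linepath x y)" "0 \<notin> path_image (f \<circ> linepath x y)"
  using path_compose_off_S[of "linepath x y"] assms by auto

lemma seg_wind_split:
  assumes y: "y \<in> closed_segment x z" and S: "closed_segment x z \<inter> S = {}"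
  shows "seg_wind x z = seg_wind x y + seg_wind y z"
proof -
  have sub: "closed_segment x y \<subseteq> closed_segment x z" "closed_segment y z \<subseteq> closed_segment x z"
    using y by (meson convex_closed_segment convex_contains_segment ends_in_segment)+
  have "homotopic_paths (closed_segment x z) (linepath x z) (linepath x y +++ linepath y z)"
  proof (rule homotopic_paths_linear)
    fix t :: real assume t: "t \<in> {0..1}"
    have "(linepath x y +++ linepath y z) t \<in> closed_segment x z"
      using t sub path_image_join[of "linepath x y" "linepath y z"]
      by (metis (no_types, lifting) Un_subset_iff path_image_linepath path_image_def
          image_subset_iff pathfinish_linepath pathstart_linepath)
    moreover have "linepath x z t \<in> closed_segment x z" using t by (metis linepath_in_path)
    ultimately show "closed_segment (linepath x z t) ((linepath x y +++ linepath y z) t) \<subseteq> closed_segment x z"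
      by (meson convex_closed_segment convex_contains_segment)
  qed auto
  from homotopic_paths_continuous_image[OF this continuous_on_off_S[OF S] image_off_S[OF S]]
  have "seg_wind x z = winding_number (f \<circ> (linepath x y +++ linepath y z)) 0"
    unfolding seg_wind_def by (rule winding_number_homotopic_paths)
  also have "\<dots> = seg_wind x y + seg_wind y z"
  proof -
    have "closed_segment x y \<inter> S = {}" "closed_segment y z \<inter> S = {}" using sub S by blast+
    note ok = this[THEN path_compose_linepath_off_S(1)] this[THEN path_compose_linepath_off_S(2)]
    show ?thesis unfolding seg_wind_def path_compose_join using ok
      by (intro winding_number_join) (auto simp: pathfinish_compose pathstart_compose)
  qed
  finally show ?thesis .
qed

lemma seg_wind_reverse:
  assumes "closed_segment x y \<inter> S = {}"
  shows "seg_wind y x = - seg_wind x y"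
proof -
  have "f \<circ> linepath y x = reversepath (f \<circ> linepath x y)"
    by (metis reversepath_linepath reversepath_o o_assoc)
  then show ?thesis
    unfolding seg_wind_def using winding_number_reversepath path_compose_linepath_off_S[OF assms]
    by metis
qed

lemma rect_wind_eq_seg_winds:
  fixes u w :: complex
  defines "a \<equiv> Complex (Re w) (Im u)" and "b \<equiv> Complex (Re u) (Im w)"
  assumes "path_image (rectpath u w) \<inter> S = {}"
  shows "rect_wind u w = seg_wind u a + seg_wind a w + seg_wind w b + seg_wind b u"
proof -
  let ?A = "f \<circ> linepath u a" and ?B = "f \<circ> linepath a w"
    and ?C = "f \<circ> linepath w b" and ?D = "f \<circ> linepath b u"
  have "closed_segment u a \<inter> S = {}" "closed_segment a w \<inter> S = {}"
      "closed_segment w b \<inter> S = {}" "closed_segment b u \<inter> S = {}"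
    using assms(3) unfolding path_image_rectpath_eq_segments a_def b_def by blast+
  note ok = this[THEN path_compose_linepath_off_S(1)] this[THEN path_compose_linepath_off_S(2)]
  have "rect_wind u w = winding_number (?A +++ ?B +++ ?C +++ ?D) 0"
    unfolding rect_wind_def rectpath_def Let_def a_def b_def path_compose_join by simp
  also have "\<dots> = seg_wind u a + seg_wind a w + seg_wind w b + seg_wind b u"
  proof -
    have j3: "winding_number (?C +++ ?D) 0 = winding_number ?C 0 + winding_number ?D 0"
      using ok by (intro winding_number_join) (auto simp: pathfinish_compose pathstart_compose)
    have p3: "path (?C +++ ?D)" "0 \<notin> path_image (?C +++ ?D)"
      using ok by (auto simp: pathfinish_compose pathstart_compose not_in_path_image_join)
    have j2: "winding_number (?B +++ ?C +++ ?D) 0 = winding_number ?B 0 + winding_number (?C +++ ?D) 0"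
      using ok p3 by (intro winding_number_join) (auto simp: pathfinish_compose pathstart_compose)
    have p2: "path (?B +++ ?C +++ ?D)" "0 \<notin> path_image (?B +++ ?C +++ ?D)"
      using ok p3 by (auto simp: pathfinish_compose pathstart_compose not_in_path_image_join)
    have j1: "winding_number (?A +++ ?B +++ ?C +++ ?D) 0
        = winding_number ?A 0 + winding_number (?B +++ ?C +++ ?D) 0"
      using ok p2 by (intro winding_number_join) (auto simp: pathfinish_compose pathstart_compose)
    show ?thesis unfolding seg_wind_def j1 j2 j3 by (simp add: add.assoc)
  qed
  finally show ?thesis .
qed

lemma rectpath_off_S:
  assumes "cbox u w \<inter> S \<subseteq> box u w" "Re u \<le> Re w" "Im u \<le> Im w"
  shows "path_image (rectpath u w) \<inter> S = {}"
  using assms path_image_rectpath_cbox_minus_box[OF assms(2,3)] by blast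

lemma rect_wind_split_vertical:
  assumes lt: "Re u < t" "t < Re w" "Im u < Im w"
    and bd: "cbox u w \<inter> S \<subseteq> box u w" and line: "\<forall>z\<in>S. Re z \<noteq> t"
  defines "p \<equiv> Complex t (Im u)" and "q \<equiv> Complex t (Im w)"
  shows "rect_wind u w = rect_wind u q + rect_wind p w"
    and "cbox u q \<inter> S \<subseteq> box u q" and "cbox p w \<inter> S \<subseteq> box p w"
proof -
  define a b where "a = Complex (Re w) (Im u)" and "b = Complex (Re u) (Im w)"
  show bL: "cbox u q \<inter> S \<subseteq> box u q" and bR: "cbox p w \<inter> S \<subseteq> box p w"
    using lt bd line by (fastforce simp: p_def q_def in_cbox_complex_iff in_box_complex_iff subset_iff)+
  have edges: "closed_segment u a \<inter> S = {}" "closed_segment w b \<inter> S = {}"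
    using rectpath_off_S[OF bd] lt unfolding path_image_rectpath_eq_segments a_def b_def by auto
  have "rect_wind u q = seg_wind u p + seg_wind p q + seg_wind q b + seg_wind b u"
    using rect_wind_eq_seg_winds[OF rectpath_off_S[OF bL]] lt by (simp add: p_def q_def b_def)
  moreover have "rect_wind p w = seg_wind p a + seg_wind a w + seg_wind w q + seg_wind q p"
    using rect_wind_eq_seg_winds[OF rectpath_off_S[OF bR]] lt by (simp add: p_def q_def a_def)
  moreover have "rect_wind u w = seg_wind u a + seg_wind a w + seg_wind w b + seg_wind b u"
    using rect_wind_eq_seg_winds[OF rectpath_off_S[OF bd]] lt by (simp add: a_def b_def)
  moreover have "seg_wind u a = seg_wind u p + seg_wind p a"
    by (rule seg_wind_split[OF _ edges(1)])
      (use lt in \<open>auto simp: p_def a_def closed_segment_same_Im closed_segment_eq_real_ivl\<close>)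
  moreover have "seg_wind w b = seg_wind w q + seg_wind q b"
    by (rule seg_wind_split[OF _ edges(2)])
      (use lt in \<open>auto simp: q_def b_def closed_segment_same_Im closed_segment_eq_real_ivl\<close>)
  moreover have "seg_wind q p = - seg_wind p q"
    by (rule seg_wind_reverse) (use line in \<open>auto simp: p_def q_def closed_segment_same_Re\<close>)
  ultimately show "rect_wind u w = rect_wind u q + rect_wind p w" by (simp add: algebra_simps)
qed

lemma rect_wind_split_horizontal:
  assumes lt: "Im u < t" "t < Im w" "Re u < Re w"
    and bd: "cbox u w \<inter> S \<subseteq> box u w" and line: "\<forall>z\<in>S. Im z \<noteq> t"
  defines "p \<equiv> Complex (Re w) t" and "q \<equiv> Complex (Re u) t"
  shows "rect_wind u w = rect_wind u p + rect_wind q w"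
    and "cbox u p \<inter> S \<subseteq> box u p" and "cbox q w \<inter> S \<subseteq> box q w"
proof -
  define a b where "a = Complex (Re w) (Im u)" and "b = Complex (Re u) (Im w)"
  show bL: "cbox u p \<inter> S \<subseteq> box u p" and bR: "cbox q w \<inter> S \<subseteq> box q w"
    using lt bd line by (fastforce simp: p_def q_def in_cbox_complex_iff in_box_complex_iff subset_iff)+
  have edges: "closed_segment a w \<inter> S = {}" "closed_segment b u \<inter> S = {}"
    using rectpath_off_S[OF bd] lt unfolding path_image_rectpath_eq_segments a_def b_def by auto
  have "rect_wind u p = seg_wind u a + seg_wind a p + seg_wind p q + seg_wind q u"
    using rect_wind_eq_seg_winds[OF rectpath_off_S[OF bL]] lt by (simp add: p_def q_def a_def)
  moreover have "rect_wind q w = seg_wind q p + seg_wind p w + seg_wind w b + seg_wind b q"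
    using rect_wind_eq_seg_winds[OF rectpath_off_S[OF bR]] lt by (simp add: p_def q_def b_def)
  moreover have "rect_wind u w = seg_wind u a + seg_wind a w + seg_wind w b + seg_wind b u"
    using rect_wind_eq_seg_winds[OF rectpath_off_S[OF bd]] lt by (simp add: a_def b_def)
  moreover have "seg_wind a w = seg_wind a p + seg_wind p w"
    by (rule seg_wind_split[OF _ edges(1)])
      (use lt in \<open>auto simp: p_def a_def closed_segment_same_Re closed_segment_eq_real_ivl\<close>)
  moreover have "seg_wind b u = seg_wind b q + seg_wind q u"
    by (rule seg_wind_split[OF _ edges(2)])
      (use lt in \<open>auto simp: q_def b_def closed_segment_same_Re closed_segment_eq_real_ivl\<close>)
  moreover have "seg_wind q p = - seg_wind p q"
    by (rule seg_wind_reverse) (use line in \<open>auto simp: p_def q_def closed_segment_same_Im\<close>)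
  ultimately show "rect_wind u w = rect_wind u p + rect_wind q w" by (simp add: algebra_simps)
qed

lemma rect_wind_eq_0:
  assumes "Re u \<le> Re w" "Im u \<le> Im w" "cbox u w \<inter> S = {}"
  shows "rect_wind u w = 0"
proof -
  have u: "u \<in> cbox u w" using assms by (simp add: in_cbox_complex_iff)
  have "homotopic_loops (cbox u w) (rectpath u w) (\<lambda>t. u)"
  proof (rule homotopic_loops_linear)
    fix t :: real assume "t \<in> {0..1}"
    then have "rectpath u w t \<in> cbox u w"
      using path_image_rectpath_subset_cbox[OF assms(1,2)] by (auto simp: path_image_def)
    then show "closed_segment (rectpath u w t) u \<subseteq> cbox u w"
      using u by (meson convex_box convex_contains_segment)
  qed (use path_rectpath[of u w] pathfinish_rectpath[of u w] pathstart_rectpath[of u w] in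
        \<open>auto simp: pathstart_def pathfinish_def path_def\<close>)
  from homotopic_loops_continuous_image[OF this continuous_on_off_S image_off_S] assms(3)
  have "rect_wind u w = winding_number (f \<circ> (\<lambda>t. u)) 0"
    unfolding rect_wind_def by (intro winding_number_homotopic_loops) auto
  also have "\<dots> = 0"
  proof -
    have "f u \<noteq> 0" using nonzero_off_S u assms(3) by blast
    then show ?thesis by (simp add: o_def winding_number_zero_const)
  qed
  finally show ?thesis .
qed

text \<open>Near an isolated singular point c, f may be replaced by any nonvanishing model field M
  making an acute angle with it.\<close>

lemma rect_wind_local_model:
  assumes c: "c \<in> box u w" "cbox u w \<inter> S = {c}"
    and M: "continuous_on UNIV M" "\<And>y. y \<noteq> c \<Longrightarrow> M y \<noteq> 0"
    and near: "\<rho> > 0" "\<And>y. 0 < norm (y - c) \<Longrightarrow> norm (y - c) < \<rho> \<Longrightarrow> f y \<bullet> M y > 0"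
  shows "rect_wind u w = winding_number (M \<circ> rectpath u w) 0"
proof -
  have le: "Re u \<le> Re w" "Im u \<le> Im w" using c(1) by (auto simp: in_box_complex_iff)
  have img: "path_image (rectpath u w) \<subseteq> cbox u w - {c}"
    using path_image_rectpath_cbox_minus_box[OF le] c(1) by auto
  define D where "D = (Re w - Re u) + (Im w - Im u)"
  have D: "D > 0" using c(1) by (auto simp: D_def in_box_complex_iff)
  define s where "s = min 1 (\<rho> / (2 * D))"
  have s: "0 < s" "s \<le> 1" "s * D < \<rho>"
    using near(1) D by (auto simp: s_def min_mult_distrib_right min_less_iff_disj)
  define \<gamma> where "\<gamma> = shrink_loop c s (rectpath u w)"
  have hom: "homotopic_loops (cbox u w - {c}) (rectpath u w) \<gamma>"
    unfolding \<gamma>_def using c(1) img s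
    by (intro homotopic_loops_shrink_loop) (auto simp: box_subset_cbox[THEN subsetD])
  have off: "(cbox u w - {c}) \<inter> S = {}" using c(2) by blast
  have "rect_wind u w = winding_number (f \<circ> \<gamma>) 0"
    using homotopic_loops_continuous_image[OF hom continuous_on_off_S[OF off] image_off_S[OF off]]
    unfolding rect_wind_def by (rule winding_number_homotopic_loops)
  also have "\<dots> = winding_number (M \<circ> \<gamma>) 0"
  proof (rule winding_number_loops_linear_eq)
    have "path \<gamma>" "path_image \<gamma> \<subseteq> cbox u w - {c}"
      using homotopic_loops_imp_path[OF hom] homotopic_loops_imp_subset[OF hom] by auto
    then show "path (f \<circ> \<gamma>)" "path (M \<circ> \<gamma>)"
      using continuous_on_compose2[OF continuous_on_off_S[OF off]]
        continuous_on_compose2[OF M(1)] unfolding path_def path_image_def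
      by (auto simp: o_def)
    show "pathfinish (f \<circ> \<gamma>) = pathstart (f \<circ> \<gamma>)" "pathfinish (M \<circ> \<gamma>) = pathstart (M \<circ> \<gamma>)"
      using homotopic_loops_imp_loop[OF hom] by (auto simp: pathfinish_compose pathstart_compose)
    fix t :: real assume t: "t \<in> {0..1}"
    have "rectpath u w t \<in> path_image (rectpath u w)" using t by (simp add: path_image_def)
    then have r: "rectpath u w t \<in> cbox u w - {c}" using img by blast
    then have "norm (rectpath u w t - c) \<le> D"
      using c(1) box_subset_cbox unfolding D_def by (meson DiffD1 norm_diff_le_in_cbox_complex subsetD)
    moreover have "norm (\<gamma> t - c) = s * norm (rectpath u w t - c)"
      using s by (simp add: \<gamma>_def norm_shrink_loop)
    ultimately have "0 < norm (\<gamma> t - c)" "norm (\<gamma> t - c) < \<rho>"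
      using s r by (auto intro: le_less_trans[OF mult_left_mono])
    then have "M (\<gamma> t) \<bullet> f (\<gamma> t) > 0" using near(2) by (simp add: inner_commute)
    then show "0 \<notin> closed_segment ((M \<circ> \<gamma>) t) ((f \<circ> \<gamma>) t)"
      by (simp add: zero_notin_segment_if_inner_pos)
  qed
  also have "\<dots> = winding_number (M \<circ> rectpath u w) 0"
  proof -
    have "M ` (cbox u w - {c}) \<subseteq> - {0}" using M(2) by force
    from homotopic_loops_continuous_image[OF hom continuous_on_subset[OF M(1)] this]
    show ?thesis by (intro winding_number_homotopic_loops[symmetric]) auto
  qed
  finally show ?thesis .
qed

text \<open>Subdividing along lines that avoid S reduces the winding number along a rectangle to
  rectangles around single singular points.\<close>

lemma rect_wind_eq_sum:
  assumes local_index: "\<And>c u w. c \<in> box u w \<Longrightarrow> cbox u w \<inter> S = {c} \<Longrightarrow> rect_wind u w = \<iota> c"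
  shows "Re u < Re w \<Longrightarrow> Im u < Im w \<Longrightarrow> cbox u w \<inter> S \<subseteq> box u w
    \<Longrightarrow> rect_wind u w = (\<Sum>c\<in>S \<inter> box u w. \<iota> c)"
proof (induction "card (S \<inter> box u w)" arbitrary: u w rule: less_induct)
  case less
  have fin: "finite (S \<inter> box u w)" using finite_S by simp
  have eqbox: "cbox u w \<inter> S = S \<inter> box u w" using less.prems box_subset_cbox by blast
  have split: "rect_wind u w = (\<Sum>c\<in>S \<inter> box u w. \<iota> c)"
    if W: "rect_wind u w = rect_wind u1 w1 + rect_wind u2 w2"
      and sub1: "Re u1 < Re w1" "Im u1 < Im w1" "cbox u1 w1 \<inter> S \<subseteq> box u1 w1"
      and sub2: "Re u2 < Re w2" "Im u2 < Im w2" "cbox u2 w2 \<inter> S \<subseteq> box u2 w2"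
      and un: "S \<inter> box u w = (S \<inter> box u1 w1) \<union> (S \<inter> box u2 w2)"
      and dis: "(S \<inter> box u1 w1) \<inter> (S \<inter> box u2 w2) = {}"
      and ne: "S \<inter> box u1 w1 \<noteq> {}" "S \<inter> box u2 w2 \<noteq> {}"
    for u1 w1 u2 w2
  proof -
    have "card (S \<inter> box u w) = card (S \<inter> box u1 w1) + card (S \<inter> box u2 w2)"
      using fin dis unfolding un by (simp add: card_Un_disjoint)
    moreover have "card (S \<inter> box u1 w1) > 0" "card (S \<inter> box u2 w2) > 0"
      using ne finite_S by (simp_all add: card_gt_0_iff)
    ultimately have "card (S \<inter> box u1 w1) < card (S \<inter> box u w)"
      "card (S \<inter> box u2 w2) < card (S \<inter> box u w)" by linarith+
    then have "rect_wind u1 w1 = (\<Sum>c\<in>S \<inter> box u1 w1. \<iota> c)" "rect_wind u2 w2 = (\<Sum>c\<in>S \<inter> box u2 w2. \<iota> c)"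
      using less.hyps sub1 sub2 by blast+
    then show ?thesis using W fin dis unfolding un by (simp add: sum.union_disjoint)
  qed
  consider "S \<inter> box u w = {}" | c where "S \<inter> box u w = {c}"
    | c1 c2 where "c1 \<in> S \<inter> box u w" "c2 \<in> S \<inter> box u w" "c1 \<noteq> c2"
    by blast
  then show ?case
  proof cases
    case 1
    then show ?thesis using rect_wind_eq_0[of u w] less.prems eqbox by simp
  next
    case (2 c)
    then show ?thesis using local_index[of c u w] eqbox by auto
  next
    case (3 c1 c2)
    show ?thesis
    proof (cases "Re c1 = Re c2")
      case False
      then have "min (Re c1) (Re c2) < max (Re c1) (Re c2)" by linarith
      then obtain t where t: "min (Re c1) (Re c2) < t" "t < max (Re c1) (Re c2)" "t \<notin> Re ` S"
        by (rule exists_between_notin_finite[OF _ finite_imageI[OF finite_S]])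
      have rng: "Re u < t" "t < Re w" using 3 t by (auto simp: in_box_complex_iff)
      have line: "\<forall>z\<in>S. Re z \<noteq> t" using t by auto
      note sp = rect_wind_split_vertical[OF rng less.prems(2,3) line]
      show ?thesis
      proof (rule split[OF sp(1) _ _ sp(2) _ _ sp(3)])
        show "S \<inter> box u w = S \<inter> box u (Complex t (Im w)) \<union> S \<inter> box (Complex t (Im u)) w"
          using line rng by (auto simp: in_box_complex_iff)
        show "S \<inter> box u (Complex t (Im w)) \<noteq> {}" "S \<inter> box (Complex t (Im u)) w \<noteq> {}"
          using 3 t by (cases "Re c1 < Re c2"; force simp: in_box_complex_iff)+
      qed (use rng less.prems in \<open>auto simp: in_box_complex_iff\<close>)
    next
      case True
      then have "Im c1 \<noteq> Im c2" using 3 complex_eq_iff by blast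
      then have "min (Im c1) (Im c2) < max (Im c1) (Im c2)" by linarith
      then obtain t where t: "min (Im c1) (Im c2) < t" "t < max (Im c1) (Im c2)" "t \<notin> Im ` S"
        by (rule exists_between_notin_finite[OF _ finite_imageI[OF finite_S]])
      have rng: "Im u < t" "t < Im w" using 3 t by (auto simp: in_box_complex_iff)
      have line: "\<forall>z\<in>S. Im z \<noteq> t" using t by auto
      note sp = rect_wind_split_horizontal[OF rng less.prems(1,3) line]
      show ?thesis
      proof (rule split[OF sp(1) _ _ sp(2) _ _ sp(3)])
        show "S \<inter> box u w = S \<inter> box u (Complex (Re w) t) \<union> S \<inter> box (Complex (Re u) t) w"
          using line rng by (auto simp: in_box_complex_iff)
        show "S \<inter> box u (Complex (Re w) t) \<noteq> {}" "S \<inter> box (Complex (Re u) t) w \<noteq> {}"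
          using 3 t by (cases "Im c1 < Im c2"; force simp: in_box_complex_iff)+
      qed (use rng less.prems in \<open>auto simp: in_box_complex_iff\<close>)
    qed
  qed
qed

end

lemma powr_minus_succ:
  assumes "(r::real) > 0"
  shows "r powr (-(a+1)) = 1 / (r powr a * r)"
proof -
  have "r powr (a+1) = r powr a * r" using assms by (simp add: powr_add)
  then show ?thesis by (metis powr_minus_divide)
qed

lemma one_le_powr_minus_succ_mult_square:
  fixes r a :: real
  assumes "a \<ge> 1" "0 < r" "r \<le> 1"
  shows "r powr (-(a+1)) * r^2 \<ge> 1"
proof -
  have "r powr (1 - a) = r powr (-(a+1)) * r powr 1 * r powr 1"
    by (simp only: powr_add[symmetric]) (simp add: algebra_simps)
  then have "r powr (-(a+1)) * r^2 = r powr (1 - a)"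
    using assms(2) by (simp add: power2_eq_square mult.assoc)
  also have "\<dots> \<ge> r powr 0" using assms by (intro powr_mono') auto
  finally show ?thesis using assms(2) by simp
qed

lemma sgn_eq_if_abs_diff_le_half:
  fixes x y :: real
  assumes "\<bar>x - y\<bar> \<le> \<bar>y\<bar> / 2"
  shows "sgn x = sgn y"
  using assms by (auto simp: sgn_if abs_if split: if_splits)

lemma not_local_min_along_ray:
  fixes f :: "'a::real_normed_vector \<Rightarrow> real"
  assumes "v \<noteq> 0" "\<delta> > 0" "\<And>t. 0 < t \<Longrightarrow> t < \<delta> \<Longrightarrow> z + t *\<^sub>R v \<in> S \<and> f (z + t *\<^sub>R v) < f z"
  shows "\<not> (\<exists>e>0. \<forall>y\<in>S. dist y z < e \<longrightarrow> f z \<le> f y)"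
proof
  assume "\<exists>e>0. \<forall>y\<in>S. dist y z < e \<longrightarrow> f z \<le> f y"
  then obtain e where e: "e > 0" "\<forall>y\<in>S. dist y z < e \<longrightarrow> f z \<le> f y" by blast
  define t where "t = min (\<delta> / 2) (e / (2 * norm v))"
  have t: "0 < t" "t < \<delta>" using assms e by (auto simp: t_def)
  have "t * norm v \<le> e / (2 * norm v) * norm v"
    using assms(1) by (intro mult_right_mono) (auto simp: t_def)
  then have "dist (z + t *\<^sub>R v) z < e" using assms(1) e t by (simp add: dist_norm)
  then show False using e assms(3)[OF t(1,2)] by fastforce
qed

section \<open>The potential and its critical points\<close>

locale satellite =
  fixes \<alpha> :: real and n :: nat and m :: "nat \<Rightarrow> real" and b :: "nat \<Rightarrow> complex"
    and phi :: "real \<Rightarrow> real"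
  assumes alpha: "\<alpha> \<ge> 1" and mass_pos: "\<And>i. i < n \<Longrightarrow> m i > 0" and inj_b: "inj_on b {..<n}"
    and phi_deriv: "\<And>r. r > 0 \<Longrightarrow> (phi has_real_derivative (- 1 / r powr \<alpha>)) (at r)"
begin

definition primaries :: "complex set" where
  "primaries = b ` {..<n}"

definition pot :: "complex \<Rightarrow> real" where
  "pot z = (norm z)^2/2 + (\<Sum>j<n. m j * phi (norm (z - b j)))"

definition grad :: "complex \<Rightarrow> complex" where
  "grad z = z - (\<Sum>j<n. (m j * norm (z - b j) powr (-(\<alpha>+1))) *\<^sub>R (z - b j))"

text \<open>The Hessian of pot at z acts as h \<mapsto> P z h + Q z (cnj h); its eigenvalues are
  P z \<plusminus> |Q z|, so z is a nondegenerate critical point iff P z \<noteq> |Q z|, a minimum iff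
  P z > |Q z| and a saddle iff P z < |Q z|.\<close>

definition P :: "complex \<Rightarrow> real" where
  "P z = 1 + (\<Sum>j<n. m j * norm (z - b j) powr (-(\<alpha>+1)) * (\<alpha> - 1) / 2)"

definition Q :: "complex \<Rightarrow> complex" where
  "Q z = (\<Sum>j<n. of_real (m j * norm (z - b j) powr (-(\<alpha>+1)) * (\<alpha>+1) / (2 * (norm (z - b j))^2))
            * (z - b j)^2)"

definition hess :: "complex \<Rightarrow> complex \<Rightarrow> complex" where
  "hess z h = of_real (P z) * h + Q z * cnj h"

lemma finite_primaries: "finite primaries"
  by (simp add: primaries_def)

lemma open_off_primaries: "open (- primaries)"
  using finite_primaries by (simp add: finite_imp_closed open_Compl)

lemma ne_primary: "z \<notin> primaries \<Longrightarrow> j < n \<Longrightarrow> z \<noteq> b j"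
  unfolding primaries_def by auto

lemma card_primaries: "card primaries = n"
  unfolding primaries_def using inj_b by (simp add: card_image)

lemma grad_has_derivative:
  assumes "z \<notin> primaries"
  shows "(grad has_derivative hess z) (at z)"
proof -
  define s where "s = -(\<alpha>+1)"
  have "((\<lambda>z. \<Sum>j<n. (m j * norm (z - b j) powr s) *\<^sub>R (z - b j)) has_derivative
     (\<lambda>h. \<Sum>j<n. of_real (m j * norm (z - b j) powr s * (1 + s/2)) * h
        + of_real (m j * norm (z - b j) powr s * s / (2 * (norm (z - b j))^2)) * (z - b j)^2 * cnj h))
     (at z)"
    by (rule has_derivative_sum) (use has_derivative_radial_field ne_primary[OF assms] in blast)
  from has_derivative_diff[OF has_derivative_ident this]
  have "(grad has_derivative (\<lambda>h. h - (\<Sum>j<n. of_real (m j * norm (z - b j) powr s * (1 + s/2)) * h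
        + of_real (m j * norm (z - b j) powr s * s / (2 * (norm (z - b j))^2)) * (z - b j)^2 * cnj h)))
     (at z)"
    unfolding grad_def s_def by simp
  moreover have "h - (\<Sum>j<n. of_real (m j * norm (z - b j) powr s * (1 + s/2)) * h
        + of_real (m j * norm (z - b j) powr s * s / (2 * (norm (z - b j))^2)) * (z - b j)^2 * cnj h)
      = hess z h" for h
  proof -
    have "(\<Sum>j<n. m j * norm (z - b j) powr s * (1 + s/2)) = 1 - P z"
      unfolding P_def s_def by (simp add: sum_negf[symmetric]) (rule sum.cong, simp_all add: field_simps)
    then have e1: "(\<Sum>j<n. of_real (m j * norm (z - b j) powr s * (1 + s/2)) * h) = (1 - of_real (P z)) * h"
      unfolding sum_distrib_right[symmetric] of_real_sum[symmetric] by simp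
    have e2: "(\<Sum>j<n. of_real (m j * norm (z - b j) powr s * s / (2 * (norm (z - b j))^2))
        * (z - b j)^2 * cnj h) = - Q z * cnj h"
      unfolding Q_def s_def sum_distrib_right sum_negf[symmetric]
      by (rule sum.cong, simp, simp only: mult_minus_right divide_minus_left of_real_minus mult_minus_left)
    show ?thesis unfolding sum.distrib e1 e2 hess_def by (simp add: algebra_simps)
  qed
  ultimately show ?thesis by simp
qed

lemma pot_has_derivative:
  assumes "z \<notin> primaries"
  shows "(pot has_derivative (\<lambda>h. grad z \<bullet> h)) (at z)"
proof -
  have "((\<lambda>z. m j * phi (norm (z - b j))) has_derivative
     (\<lambda>h. m j * ((- 1 / norm (z - b j) powr \<alpha>) * ((h \<bullet> (z - b j)) / norm (z - b j))))) (at z)"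
    if j: "j < n" for j
  proof -
    have "((\<lambda>z. phi (norm (z - b j))) has_derivative
       (\<lambda>h. (- 1 / norm (z - b j) powr \<alpha>) * ((h \<bullet> (z - b j)) / norm (z - b j)))) (at z)"
      using has_derivative_compose[OF has_derivative_norm_diff[OF ne_primary[OF assms j]]
          phi_deriv[unfolded has_field_derivative_def, of "norm (z - b j)"]] ne_primary[OF assms j]
      by simp
    from has_derivative_mult_right[OF this, of "m j"] show ?thesis by simp
  qed
  moreover have "((\<lambda>z. (norm z)^2/2) has_derivative (\<lambda>h. z \<bullet> h)) (at z)"
    unfolding power2_norm_eq_inner by (auto intro!: derivative_eq_intros simp: inner_commute)
  ultimately have "(pot has_derivative (\<lambda>h. z \<bullet> h
      + (\<Sum>j<n. m j * ((- 1 / norm (z - b j) powr \<alpha>) * ((h \<bullet> (z - b j)) / norm (z - b j))))))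
      (at z)"
    unfolding pot_def by (intro has_derivative_add has_derivative_sum) auto
  moreover have "z \<bullet> h + (\<Sum>j<n. m j * ((- 1 / norm (z - b j) powr \<alpha>) * ((h \<bullet> (z - b j)) / norm (z - b j))))
      = grad z \<bullet> h" for h
  proof -
    have "m j * ((- 1 / norm (z - b j) powr \<alpha>) * ((h \<bullet> (z - b j)) / norm (z - b j)))
        = - (((m j * norm (z - b j) powr (-(\<alpha>+1))) *\<^sub>R (z - b j)) \<bullet> h)" if "j < n" for j
      using powr_minus_succ[of "norm (z - b j)" \<alpha>] ne_primary[OF assms that] by (simp add: inner_commute)
    then show ?thesis
      unfolding grad_def by (simp add: inner_diff_left inner_sum_left sum_negf[symmetric])
  qed
  ultimately show ?thesis by simp
qed

lemma grad_continuous_at: "z \<notin> primaries \<Longrightarrow> isCont grad z"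
  using grad_has_derivative has_derivative_continuous by blast

lemma grad_continuous_on: "continuous_on (- primaries) grad"
  using grad_continuous_at by (simp add: continuous_at_imp_continuous_on)

lemma pot_continuous_on: "continuous_on (- primaries) pot"
  using pot_has_derivative
  by (intro continuous_at_imp_continuous_on) (auto dest: has_derivative_continuous)

lemma P_ge_1: "P z \<ge> 1"
proof -
  have "(\<Sum>j<n. m j * norm (z - b j) powr (-(\<alpha>+1)) * (\<alpha> - 1) / 2) \<ge> 0"
    using mass_pos alpha by (intro sum_nonneg divide_nonneg_pos mult_nonneg_nonneg) (auto simp: less_imp_le)
  then show ?thesis unfolding P_def by simp
qed

lemma hess_scaleR: "hess z (c *\<^sub>R v) = c *\<^sub>R hess z v"
  unfolding hess_def by (simp add: scaleR_conv_of_real algebra_simps)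

lemma hess_inner_self: "hess z v \<bullet> v = P z * (norm v)^2 + (Q z * cnj v) \<bullet> v"
  unfolding hess_def by (simp add: inner_add_left power2_norm_eq_inner scaleR_conv_of_real[symmetric])

lemma hess_inner_self_ge: "hess z v \<bullet> v \<ge> (P z - norm (Q z)) * (norm v)^2"
proof -
  have "\<bar>(Q z * cnj v) \<bullet> v\<bar> \<le> norm (Q z * cnj v) * norm v" by (rule Cauchy_Schwarz_ineq2)
  also have "\<dots> = norm (Q z) * (norm v)^2" by (simp add: norm_mult power2_eq_square)
  finally show ?thesis by (simp add: hess_inner_self algebra_simps abs_le_iff)
qed

definition loc_min :: "complex \<Rightarrow> bool" where
  "loc_min z \<longleftrightarrow> z \<notin> primaries \<and> (\<exists>e>0. \<forall>y\<in>- primaries. dist y z < e \<longrightarrow> pot z \<le> pot y)"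

definition loc_max :: "complex \<Rightarrow> bool" where
  "loc_max z \<longleftrightarrow> z \<notin> primaries \<and> (\<exists>e>0. \<forall>y\<in>- primaries. dist y z < e \<longrightarrow> pot y \<le> pot z)"

lemma grad_linear_approx:
  assumes "z \<notin> primaries" "\<epsilon> > 0"
  shows "\<exists>d>0. \<forall>y. norm (y - z) < d \<longrightarrow>
           y \<notin> primaries \<and> norm (grad y - grad z - hess z (y - z)) \<le> \<epsilon> * norm (y - z)"
proof -
  obtain d1 where d1: "d1 > 0"
    "\<forall>y. norm (y - z) < d1 \<longrightarrow> norm (grad y - grad z - hess z (y - z)) \<le> \<epsilon> * norm (y - z)"
    using grad_has_derivative[OF assms(1)] assms(2) unfolding has_derivative_at_alt by blast
  obtain d2 where d2: "d2 > 0" "ball z d2 \<subseteq> - primaries"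
    using open_off_primaries assms(1) open_contains_ball by blast
  then have "y \<notin> primaries" if "norm (y - z) < d2" for y
    using that by (auto simp: dist_norm norm_minus_commute subset_iff)
  then show ?thesis using d1 d2 by (intro exI[of _ "min d1 d2"]) auto
qed

lemma pot_line_has_derivative:
  assumes "z + s *\<^sub>R v \<notin> primaries"
  shows "((\<lambda>s. pot (z + s *\<^sub>R v)) has_real_derivative (grad (z + s *\<^sub>R v) \<bullet> v)) (at s)"
proof -
  have "((\<lambda>s. z + s *\<^sub>R v) has_derivative (\<lambda>h. h *\<^sub>R v)) (at s)"
    by (auto intro!: derivative_eq_intros)
  from has_derivative_compose[OF this pot_has_derivative[OF assms]]
  have "((\<lambda>s. pot (z + s *\<^sub>R v)) has_derivative (\<lambda>h. grad (z + s *\<^sub>R v) \<bullet> (h *\<^sub>R v))) (at s)"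
    by (simp add: o_def)
  moreover have "(\<lambda>h. grad (z + s *\<^sub>R v) \<bullet> (h *\<^sub>R v)) = (*) (grad (z + s *\<^sub>R v) \<bullet> v)"
    by (auto simp: mult.commute)
  ultimately show ?thesis by (simp add: has_field_derivative_def)
qed

lemma pot_mean_value_on_segment:
  assumes "t > 0" "\<And>s. 0 \<le> s \<Longrightarrow> s \<le> t \<Longrightarrow> z + s *\<^sub>R v \<notin> primaries"
  obtains \<theta> where "0 < \<theta>" "\<theta> < t" "pot (z + t *\<^sub>R v) - pot z = t * (grad (z + \<theta> *\<^sub>R v) \<bullet> v)"
  using MVT2[OF assms(1), of "\<lambda>s. pot (z + s *\<^sub>R v)" "\<lambda>s. grad (z + s *\<^sub>R v) \<bullet> v"]
    pot_line_has_derivative assms(2) by auto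

lemma pot_ray_first_order:
  assumes z: "z \<notin> primaries" and "grad z \<bullet> v \<noteq> 0"
  shows "\<exists>\<delta>>0. \<forall>t. 0 < t \<and> t < \<delta> \<longrightarrow>
           z + t *\<^sub>R v \<notin> primaries \<and> sgn (pot (z + t *\<^sub>R v) - pot z) = sgn (grad z \<bullet> v)"
proof -
  have v0: "v \<noteq> 0" using assms by auto
  have der: "((\<lambda>s. pot (z + s *\<^sub>R v)) has_real_derivative (grad (z + 0 *\<^sub>R v) \<bullet> v)) (at 0)"
    by (rule pot_line_has_derivative) (use z in simp)
  obtain d1 where d1: "d1 > 0"
    "\<forall>h>0. h < d1 \<longrightarrow> sgn (pot (z + h *\<^sub>R v) - pot z) = sgn (grad z \<bullet> v)"
  proof (cases "grad z \<bullet> v > 0")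
    case True
    with DERIV_pos_inc_right[OF der] obtain d
      where "d > 0" "\<forall>h>0. h < d \<longrightarrow> pot (z + 0 *\<^sub>R v) < pot (z + (0 + h) *\<^sub>R v)" by auto
    then show ?thesis using True by (intro that[of d]) auto
  next
    case False
    with assms DERIV_neg_dec_right[OF der] obtain d
      where "d > 0" "\<forall>h>0. h < d \<longrightarrow> pot (z + 0 *\<^sub>R v) > pot (z + (0 + h) *\<^sub>R v)" by force
    then show ?thesis using False assms by (intro that[of d]) (auto simp: sgn_if)
  qed
  obtain d2 where d2: "d2 > 0" "\<forall>y. norm (y - z) < d2 \<longrightarrow> y \<notin> primaries"
    using grad_linear_approx[OF z zero_less_one] by blast
  show ?thesis
  proof (intro exI[of _ "min d1 (d2 / norm v)"] conjI allI impI)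
    show "min d1 (d2 / norm v) > 0" using d1 d2 v0 by simp
    fix t assume t: "0 < t \<and> t < min d1 (d2 / norm v)"
    then have "norm (z + t *\<^sub>R v - z) < d2" using v0 by (simp add: pos_less_divide_eq)
    then show "z + t *\<^sub>R v \<notin> primaries" using d2 by blast
    show "sgn (pot (z + t *\<^sub>R v) - pot z) = sgn (grad z \<bullet> v)" using d1 t by auto
  qed
qed

lemma grad_inner_ray_estimate:
  assumes "norm (grad y - grad z - hess z (y - z)) \<le> \<epsilon> * norm (y - z)" "grad z = 0"
    and "y = z + \<theta> *\<^sub>R v" "\<theta> > 0"
  shows "\<bar>grad y \<bullet> v - \<theta> * (hess z v \<bullet> v)\<bar> \<le> \<epsilon> * \<theta> * (norm v)^2"
proof -
  define E where "E = grad y - \<theta> *\<^sub>R hess z v"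
  have "norm E \<le> \<epsilon> * (\<theta> * norm v)" using assms by (simp add: E_def hess_scaleR)
  moreover have "\<bar>E \<bullet> v\<bar> \<le> norm E * norm v"
    using Cauchy_Schwarz_ineq2[of E v] by linarith
  ultimately have "\<bar>E \<bullet> v\<bar> \<le> \<epsilon> * \<theta> * (norm v)^2"
    by (smt (verit) mult.assoc mult_right_mono norm_ge_zero power2_eq_square)
  then show ?thesis by (simp add: E_def inner_diff_left)
qed

lemma pot_ray_second_order:
  assumes z: "z \<notin> primaries" "grad z = 0" and c: "hess z v \<bullet> v \<noteq> 0"
  shows "\<exists>\<delta>>0. \<forall>t. 0 < t \<and> t < \<delta> \<longrightarrow>
           z + t *\<^sub>R v \<notin> primaries \<and> sgn (pot (z + t *\<^sub>R v) - pot z) = sgn (hess z v \<bullet> v)"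
proof -
  define c where "c = hess z v \<bullet> v"
  have v0: "v \<noteq> 0" using c by (auto simp: hess_def)
  define \<epsilon> where "\<epsilon> = \<bar>c\<bar> / (2 * (norm v)^2)"
  have eps: "\<epsilon> > 0" using c v0 by (simp add: \<epsilon>_def c_def)
  obtain d where d: "d > 0" "\<forall>y. norm (y - z) < d \<longrightarrow>
      y \<notin> primaries \<and> norm (grad y - grad z - hess z (y - z)) \<le> \<epsilon> * norm (y - z)"
    using grad_linear_approx[OF z(1) eps] by blast
  have "z + t *\<^sub>R v \<notin> primaries \<and> sgn (pot (z + t *\<^sub>R v) - pot z) = sgn c"
    if t: "0 < t" "t < d / norm v" for t
  proof
    have inb: "norm (z + s *\<^sub>R v - z) < d" if "0 \<le> s" "s \<le> t" for s
    proof -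
      have "norm (z + s *\<^sub>R v - z) \<le> t * norm v" using that by (simp add: mult_right_mono)
      also have "\<dots> < d" using t v0 by (simp add: pos_less_divide_eq)
      finally show ?thesis .
    qed
    then show "z + t *\<^sub>R v \<notin> primaries" using t d by force
    obtain \<theta> where th: "0 < \<theta>" "\<theta> < t" "pot (z + t *\<^sub>R v) - pot z = t * (grad (z + \<theta> *\<^sub>R v) \<bullet> v)"
      using pot_mean_value_on_segment[of t z v] t d inb by (metis less_le_not_le)
    have "\<bar>grad (z + \<theta> *\<^sub>R v) \<bullet> v - \<theta> * c\<bar> \<le> \<epsilon> * \<theta> * (norm v)^2"
      unfolding c_def
    proof (rule grad_inner_ray_estimate)
      show "norm (grad (z + \<theta> *\<^sub>R v) - grad z - hess z (z + \<theta> *\<^sub>R v - z))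
          \<le> \<epsilon> * norm (z + \<theta> *\<^sub>R v - z)"
        using d inb[of \<theta>] th by (meson less_imp_le)
    qed (use th z in auto)
    also have "\<epsilon> * \<theta> * (norm v)^2 = \<theta> * \<bar>c\<bar> / 2" using v0 by (simp add: \<epsilon>_def)
    also have "\<dots> = \<bar>\<theta> * c\<bar> / 2" using th(1) by (simp add: abs_mult)
    finally have "sgn (grad (z + \<theta> *\<^sub>R v) \<bullet> v) = sgn (\<theta> * c)"
      by (rule sgn_eq_if_abs_diff_le_half)
    then have "sgn (grad (z + \<theta> *\<^sub>R v) \<bullet> v) = sgn c" using th(1) by (simp add: sgn_mult)
    then show "sgn (pot (z + t *\<^sub>R v) - pot z) = sgn c" using th(3) t by (simp add: sgn_mult)
  qed
  moreover have "d / norm v > 0" using d v0 by simp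
  ultimately show ?thesis unfolding c_def by blast
qed

lemma not_loc_min_if_descent:
  assumes "v \<noteq> 0" "\<delta> > 0"
    and "\<forall>t. 0 < t \<and> t < \<delta> \<longrightarrow> z + t *\<^sub>R v \<notin> primaries \<and> sgn (pot (z + t *\<^sub>R v) - pot z) = -1"
  shows "\<not> loc_min z"
proof -
  have "z + t *\<^sub>R v \<in> - primaries \<and> pot (z + t *\<^sub>R v) < pot z" if "0 < t" "t < \<delta>" for t
    using assms(3) that by (auto simp: sgn_if split: if_splits)
  from not_local_min_along_ray[OF assms(1,2) this] show ?thesis unfolding loc_min_def by blast
qed

lemma not_loc_max_if_ascent:
  assumes "v \<noteq> 0" "\<delta> > 0"
    and "\<forall>t. 0 < t \<and> t < \<delta> \<longrightarrow> z + t *\<^sub>R v \<notin> primaries \<and> sgn (pot (z + t *\<^sub>R v) - pot z) = 1"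
  shows "\<not> loc_max z"
proof -
  have "z + t *\<^sub>R v \<in> - primaries \<and> - pot (z + t *\<^sub>R v) < - pot z" if "0 < t" "t < \<delta>" for t
    using assms(3) that by (auto simp: sgn_if split: if_splits)
  from not_local_min_along_ray[OF assms(1,2) this] show ?thesis unfolding loc_max_def by auto
qed

text \<open>P z \<ge> 1 > 0 makes the Hessian form positive in some direction at every critical point.\<close>

theorem no_loc_max: "\<not> loc_max z"
proof (cases "z \<notin> primaries")
  case z: True
  show ?thesis
  proof (cases "grad z = 0")
    case False
    then obtain \<delta> where "\<delta> > 0" "\<forall>t. 0 < t \<and> t < \<delta> \<longrightarrow>
        z + t *\<^sub>R grad z \<notin> primaries \<and> sgn (pot (z + t *\<^sub>R grad z) - pot z) = sgn (grad z \<bullet> grad z)"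
      using pot_ray_first_order[OF z, of "grad z"] by auto
    then show ?thesis using False by (intro not_loc_max_if_ascent[of "grad z" \<delta>]) auto
  next
    case True
    obtain v where v: "norm v = 1" "(Q z * cnj v) \<bullet> v = 1 * norm (Q z)"
      using exists_unit_conj_inner by blast
    have "hess z v \<bullet> v > 0"
      using v P_ge_1[of z] by (simp add: hess_inner_self add_pos_nonneg)
    then obtain \<delta> where "\<delta> > 0" "\<forall>t. 0 < t \<and> t < \<delta> \<longrightarrow>
        z + t *\<^sub>R v \<notin> primaries \<and> sgn (pot (z + t *\<^sub>R v) - pot z) = 1"
      using pot_ray_second_order[OF z True, of v] by auto
    then show ?thesis using v(1) by (intro not_loc_max_if_ascent[of v \<delta>]) auto
  qed
qed (simp add: loc_max_def)

lemma loc_min_imp_critical: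
  assumes "loc_min z"
  shows "grad z = 0"
proof (rule ccontr)
  assume g: "grad z \<noteq> 0"
  have z: "z \<notin> primaries" using assms by (simp add: loc_min_def)
  have "grad z \<bullet> (- grad z) < 0" using g by simp
  then obtain \<delta> where "\<delta> > 0" "\<forall>t. 0 < t \<and> t < \<delta> \<longrightarrow>
      z + t *\<^sub>R (- grad z) \<notin> primaries \<and> sgn (pot (z + t *\<^sub>R (- grad z)) - pot z) = -1"
    using pot_ray_first_order[OF z, of "- grad z"] by auto
  then have "\<not> loc_min z" using g by (intro not_loc_min_if_descent[of "- grad z" \<delta>]) auto
  then show False using assms by blast
qed

lemma not_loc_min_if_P_less_Q:
  assumes z: "z \<notin> primaries" "grad z = 0" and "P z < norm (Q z)"
  shows "\<not> loc_min z"
proof -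
  obtain v where v: "norm v = 1" "(Q z * cnj v) \<bullet> v = (-1) * norm (Q z)"
    using exists_unit_conj_inner by blast
  then have "hess z v \<bullet> v < 0" using assms by (simp add: hess_inner_self)
  then obtain \<delta> where "\<delta> > 0" "\<forall>t. 0 < t \<and> t < \<delta> \<longrightarrow>
      z + t *\<^sub>R v \<notin> primaries \<and> sgn (pot (z + t *\<^sub>R v) - pot z) = -1"
    using pot_ray_second_order[OF z, of v] by auto
  then show ?thesis using v(1) by (intro not_loc_min_if_descent[of v \<delta>]) auto
qed

lemma loc_min_if_P_greater_Q:
  assumes z: "z \<notin> primaries" "grad z = 0" and "P z > norm (Q z)"
  shows "loc_min z"
proof -
  define \<kappa> where "\<kappa> = P z - norm (Q z)"
  have k: "\<kappa> > 0" using assms by (simp add: \<kappa>_def)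
  obtain d where d: "d > 0" "\<forall>y. norm (y - z) < d \<longrightarrow>
      y \<notin> primaries \<and> norm (grad y - grad z - hess z (y - z)) \<le> (\<kappa>/2) * norm (y - z)"
    using grad_linear_approx[OF z(1), of "\<kappa>/2"] k by auto
  have "pot z \<le> pot y" if y: "norm (y - z) < d" for y
  proof -
    define v where "v = y - z"
    have inb: "norm (z + s *\<^sub>R v - z) < d" if "0 \<le> s" "s \<le> 1" for s
    proof -
      have "norm (z + s *\<^sub>R v - z) \<le> norm v" using that by (simp add: mult_left_le_one_le)
      then show ?thesis using y v_def by simp
    qed
    obtain \<theta> where th: "0 < \<theta>" "\<theta> < 1" "pot (z + 1 *\<^sub>R v) - pot z = 1 * (grad (z + \<theta> *\<^sub>R v) \<bullet> v)"
      by (rule pot_mean_value_on_segment[of 1 z v]) (use d inb in auto)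
    have "\<bar>grad (z + \<theta> *\<^sub>R v) \<bullet> v - \<theta> * (hess z v \<bullet> v)\<bar> \<le> (\<kappa>/2) * \<theta> * (norm v)^2"
    proof (rule grad_inner_ray_estimate)
      show "norm (grad (z + \<theta> *\<^sub>R v) - grad z - hess z (z + \<theta> *\<^sub>R v - z))
          \<le> (\<kappa>/2) * norm (z + \<theta> *\<^sub>R v - z)"
        using d inb[of \<theta>] th by (meson less_imp_le)
    qed (use th z in auto)
    moreover have "\<theta> * (hess z v \<bullet> v) \<ge> \<theta> * (\<kappa> * (norm v)^2)"
      using hess_inner_self_ge[of z v] th by (simp add: \<kappa>_def mult_left_mono)
    moreover have "(\<kappa>/2) * \<theta> * (norm v)^2 \<le> \<theta> * (\<kappa> * (norm v)^2)"
      using k th by (simp add: mult_left_mono)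
    ultimately have "grad (z + \<theta> *\<^sub>R v) \<bullet> v \<ge> 0" unfolding abs_le_iff by linarith
    then show ?thesis using th by (simp add: v_def)
  qed
  then show ?thesis unfolding loc_min_def using z d by (auto simp: dist_norm intro!: exI[of _ d])
qed

section \<open>Zeros and poles of the gradient\<close>

definition crit :: "complex set" where
  "crit = {z. z \<notin> primaries \<and> grad z = 0}"

definition total_mass :: real where
  "total_mass = (\<Sum>j<n. m j)"

definition far_radius :: real where
  "far_radius = 1 + total_mass + (\<Sum>j<n. norm (b j))"

lemma total_mass_nonneg: "total_mass \<ge> 0"
  unfolding total_mass_def using mass_pos by (intro sum_nonneg) (auto simp: less_imp_le)

lemma norm_primary_le: "j < n \<Longrightarrow> norm (b j) \<le> (\<Sum>j<n. norm (b j))"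
  by (rule member_le_sum) auto

lemma grad_inner_self_pos_far:
  assumes "norm z \<ge> far_radius"
  shows "z \<notin> primaries \<and> grad z \<bullet> z > 0"
proof -
  have rj: "norm (z - b j) \<ge> 1 + total_mass" if "j < n" for j
    using norm_triangle_ineq2[of z "b j"] norm_primary_le[OF that] assms unfolding far_radius_def
    by linarith
  have zB: "z \<notin> primaries" using rj total_mass_nonneg unfolding primaries_def by force
  have summand: "(m j * norm (z - b j) powr (-(\<alpha>+1))) * ((z - b j) \<bullet> z) \<le> m j * norm z"
    if j: "j < n" for j
  proof -
    define r where "r = norm (z - b j)"
    have r1: "r \<ge> 1" using rj[OF j] total_mass_nonneg unfolding r_def by linarith
    have "(z - b j) \<bullet> z \<le> r * norm z"
      unfolding r_def using Cauchy_Schwarz_ineq2[of "z - b j" z] by linarith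
    then have "r powr (-(\<alpha>+1)) * ((z - b j) \<bullet> z) \<le> r powr (-(\<alpha>+1)) * (r * norm z)"
      by (simp add: mult_left_mono)
    also have "\<dots> = norm z / r powr \<alpha>" using powr_minus_succ[of r] r1 by simp
    also have "\<dots> \<le> norm z" using ge_one_powr_ge_zero[OF r1, of \<alpha>] alpha
      by (simp add: divide_le_eq mult_le_cancel_left1)
    finally show ?thesis using mass_pos[OF j] by (simp add: r_def mult.assoc mult_left_mono)
  qed
  have "grad z \<bullet> z = (norm z)^2 - (\<Sum>j<n. (m j * norm (z - b j) powr (-(\<alpha>+1))) * ((z - b j) \<bullet> z))"
    unfolding grad_def by (simp add: inner_diff_left inner_sum_left power2_norm_eq_inner)
  also have "\<dots> \<ge> (norm z)^2 - total_mass * norm z"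
    using sum_mono[of "{..<n}", OF summand] unfolding total_mass_def sum_distrib_right by simp
  finally have "grad z \<bullet> z \<ge> norm z * (norm z - total_mass)"
    by (simp add: power2_eq_square algebra_simps)
  moreover have "norm z - total_mass > 0" "norm z > 0"
    using assms total_mass_nonneg sum_nonneg[of "{..<n}" "\<lambda>j. norm (b j)"]
    unfolding far_radius_def by auto
  ultimately show ?thesis using zB by (smt (verit) mult_pos_pos)
qed

text \<open>Near a primary b j, grad is dominated by the attraction of b j, which points into b j.\<close>

lemma grad_inner_near_primary:
  assumes j: "j < n"
  shows "\<exists>\<rho>>0. \<forall>z. 0 < norm (z - b j) \<and> norm (z - b j) < \<rho> \<longrightarrow>
           z \<notin> primaries \<and> grad z \<bullet> (b j - z) > 0"
proof -
  define E where "E z = z - (\<Sum>k\<in>{..<n}-{j}. (m k * norm (z - b k) powr (-(\<alpha>+1))) *\<^sub>R (z - b k))"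
    for z
  have grad_E: "grad z = E z - (m j * norm (z - b j) powr (-(\<alpha>+1))) *\<^sub>R (z - b j)" for z
    unfolding grad_def E_def
    using sum.remove[of "{..<n}" j "\<lambda>k. (m k * norm (z - b k) powr (-(\<alpha>+1))) *\<^sub>R (z - b k)"] j
    by (simp add: algebra_simps)
  have "b k \<noteq> b j" if "k \<in> {..<n} - {j}" for k
    using inj_b j that by (auto dest: inj_onD)
  then have "isCont E (b j)"
    unfolding E_def by (intro continuous_intros) (auto simp: eq_commute[of "b j"])
  then obtain d0 where d0: "d0 > 0" "\<forall>z. dist z (b j) < d0 \<longrightarrow> dist (E z) (E (b j)) < 1"
    unfolding continuous_at_eps_delta by (meson zero_less_one)
  define C where "C = norm (E (b j)) + 1"
  have C: "C \<ge> 1" unfolding C_def by simp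
  have "open (- (primaries - {b j}))" using finite_primaries by (intro open_Compl finite_imp_closed) auto
  then obtain d1 where d1: "d1 > 0" "ball (b j) d1 \<subseteq> - (primaries - {b j})"
    using open_contains_ball by blast
  have mj: "m j > 0" using mass_pos j by simp
  define \<rho> where "\<rho> = min (min d0 d1) (min 1 (m j / C))"
  have "z \<notin> primaries \<and> grad z \<bullet> (b j - z) > 0" if z: "0 < norm (z - b j)" "norm (z - b j) < \<rho>" for z
  proof
    define r where "r = norm (z - b j)"
    have r: "0 < r" "r < d0" "r < d1" "r < 1" "r < m j / C" using z unfolding r_def \<rho>_def by auto
    have "z \<in> ball (b j) d1" using r by (simp add: r_def dist_norm norm_minus_commute)
    then show "z \<notin> primaries" using d1 z by auto
    have "norm (E z) \<le> C"
      using d0 r norm_triangle_ineq2[of "E z" "E (b j)"] unfolding C_def r_def dist_norm by force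
    then have "E z \<bullet> (z - b j) \<le> C * r"
      using Cauchy_Schwarz_ineq2[of "E z" "z - b j"] r(1) unfolding r_def
      by (smt (verit) mult_right_mono)
    moreover have "r powr (-(\<alpha>+1)) * r^2 \<ge> 1"
      using alpha r by (intro one_le_powr_minus_succ_mult_square) auto
    moreover have "C * r < m j" using r C by (simp add: pos_less_divide_eq mult.commute)
    moreover have "grad z \<bullet> (b j - z) = m j * (r powr (-(\<alpha>+1)) * r^2) - E z \<bullet> (z - b j)"
      unfolding grad_E
      by (simp add: inner_diff_left inner_diff_right r_def power2_norm_eq_inner algebra_simps)
    ultimately show "grad z \<bullet> (b j - z) > 0" using mj by (smt (verit) mult_le_cancel_left1)
  qed
  moreover have "\<rho> > 0" using d0 d1 C mj by (simp add: \<rho>_def)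
  ultimately show ?thesis by blast
qed

text \<open>Model fields, one for each kind of zero or pole of grad, with their local indices.\<close>

definition model :: "complex \<Rightarrow> complex \<Rightarrow> complex" where
  "model c y = (if c \<in> primaries then c - y else if norm (Q c) < P c then y - c else Q c * cnj (y - c))"

definition index :: "complex \<Rightarrow> complex" where
  "index c = (if c \<in> primaries \<or> norm (Q c) < P c then 1 else -1)"

lemma continuous_model: "continuous_on UNIV (model c)"
  unfolding model_def
  by (cases "c \<in> primaries"; cases "norm (Q c) < P c") (auto intro!: continuous_intros)

lemma model_nonzero:
  assumes "y \<noteq> c" "c \<notin> primaries \<Longrightarrow> P c \<noteq> norm (Q c)"
  shows "model c y \<noteq> 0"
proof -
  have "Q c \<noteq> 0" if "\<not> norm (Q c) < P c" "c \<notin> primaries"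
    using that assms(2) P_ge_1[of c] by auto
  then show ?thesis using assms(1) by (auto simp: model_def)
qed

lemma winding_number_model:
  assumes "c \<in> box u w" "c \<notin> primaries \<Longrightarrow> P c \<noteq> norm (Q c)"
  shows "winding_number (model c \<circ> rectpath u w) 0 = index c"
proof -
  have le: "Re u \<le> Re w" "Im u \<le> Im w" using assms(1) by (auto simp: in_box_complex_iff)
  have c: "c \<notin> path_image (rectpath u w)"
    using assms(1) path_image_rectpath_cbox_minus_box[OF le] by auto
  note loop = path_rectpath[of u w] pathfinish_rectpath[of u w] pathstart_rectpath[of u w]
  have w1: "winding_number (rectpath u w) c = 1" using assms(1) by (rule winding_number_rectpath)
  consider "c \<in> primaries" | "c \<notin> primaries" "norm (Q c) < P c" | "c \<notin> primaries" "P c < norm (Q c)"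
    using assms(2) by fastforce
  then show ?thesis
  proof cases
    case 1
    then have "model c \<circ> rectpath u w = (\<lambda>t. (-1) * (rectpath u w t - c))"
      by (auto simp: model_def)
    then show ?thesis using winding_number_linear_image[of "rectpath u w" c "-1"] loop c w1 1
      by (simp add: index_def)
  next
    case 2
    then have "model c \<circ> rectpath u w = (\<lambda>t. 1 * (rectpath u w t - c))"
      by (auto simp: model_def)
    then show ?thesis using winding_number_linear_image[of "rectpath u w" c 1] loop c w1 2
      by (simp add: index_def)
  next
    case 3
    then have "Q c \<noteq> 0" using P_ge_1[of c] by auto
    moreover have "model c \<circ> rectpath u w = (\<lambda>t. Q c * cnj (rectpath u w t - c))"
      using 3 by (auto simp: model_def)
    ultimately show ?thesis using winding_number_conj_linear_image[of "rectpath u w" c "Q c"] loop c w1 3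
      by (simp add: index_def)
  qed
qed

lemma hess_perturbed_inner_pos_if_P_greater_Q:
  assumes lt: "norm (Q c) < P c" and w: "w \<noteq> 0" and E: "norm E \<le> (P c - norm (Q c)) / 2 * norm w"
  shows "(hess c w + E) \<bullet> w > 0"
proof -
  have "E \<bullet> w \<ge> - ((P c - norm (Q c)) / 2 * norm w * norm w)"
    using Cauchy_Schwarz_ineq2[of E w] E by (smt (verit) mult_right_mono norm_ge_zero)
  moreover have "(P c - norm (Q c)) / 2 * norm w * norm w < (P c - norm (Q c)) * (norm w)^2"
    using lt w by (simp add: power2_eq_square)
  ultimately show ?thesis using hess_inner_self_ge[of c w] by (simp add: inner_add_left)
qed

lemma hess_perturbed_inner_pos_if_P_less_Q:
  assumes lt: "P c < norm (Q c)" and w: "w \<noteq> 0" and E: "norm E \<le> (norm (Q c) - P c) / 2 * norm w"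
  shows "(hess c w + E) \<bullet> (Q c * cnj w) > 0"
proof -
  define \<epsilon> where "\<epsilon> = (norm (Q c) - P c) / 2"
  have p0: "P c > 0" using P_ge_1[of c] by simp
  have nq: "norm (Q c * cnj w) = norm (Q c) * norm w" by (simp add: norm_mult)
  have "(of_real (P c) * w) \<bullet> (Q c * cnj w) \<ge> - (P c * norm w * (norm (Q c) * norm w))"
    using Cauchy_Schwarz_ineq2[of "of_real (P c) * w" "Q c * cnj w"] p0
    by (simp add: norm_mult nq abs_le_iff)
  moreover have "(Q c * cnj w) \<bullet> (Q c * cnj w) = (norm (Q c) * norm w)^2"
    by (simp add: power2_norm_eq_inner[symmetric] nq)
  moreover have "E \<bullet> (Q c * cnj w) \<ge> - (\<epsilon> * norm w * (norm (Q c) * norm w))"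
    using Cauchy_Schwarz_ineq2[of E "Q c * cnj w"] E nq unfolding \<epsilon>_def
    by (smt (verit) mult_right_mono norm_ge_zero)
  moreover have "(\<epsilon> + P c) * (norm (Q c) * norm w * norm w) < norm (Q c) * (norm (Q c) * norm w * norm w)"
  proof (rule mult_strict_right_mono)
    show "\<epsilon> + P c < norm (Q c)" using lt by (simp add: \<epsilon>_def field_simps)
    have "norm (Q c) > 0" using lt p0 by linarith
    then show "0 < norm (Q c) * norm w * norm w" using w by simp
  qed
  ultimately show ?thesis
    unfolding hess_def by (simp add: inner_add_left power2_eq_square algebra_simps)
qed

lemma grad_inner_model_near_critical:
  assumes c: "c \<in> crit" and nd: "P c \<noteq> norm (Q c)"
  shows "\<exists>\<rho>>0. \<forall>y. 0 < norm (y - c) \<and> norm (y - c) < \<rho> \<longrightarrow> y \<notin> primaries \<and> grad y \<bullet> model c y > 0"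
proof -
  have z: "c \<notin> primaries" "grad c = 0" using c by (auto simp: crit_def)
  define \<epsilon> where "\<epsilon> = \<bar>P c - norm (Q c)\<bar> / 2"
  have "\<epsilon> > 0" using nd by (simp add: \<epsilon>_def)
  then obtain d where d: "d > 0" "\<forall>y. norm (y - c) < d \<longrightarrow>
      y \<notin> primaries \<and> norm (grad y - grad c - hess c (y - c)) \<le> \<epsilon> * norm (y - c)"
    using grad_linear_approx[OF z(1)] by blast
  have "grad y \<bullet> model c y > 0" if y: "0 < norm (y - c)" "norm (y - c) < d" for y
  proof -
    define E where "E = grad y - hess c (y - c)"
    have "grad y = hess c (y - c) + E" "norm E \<le> \<epsilon> * norm (y - c)" "y - c \<noteq> 0"
      using d y z by (auto simp: E_def)
    then show ?thesis
      using nd z hess_perturbed_inner_pos_if_P_greater_Q[of c "y - c" E]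
        hess_perturbed_inner_pos_if_P_less_Q[of c "y - c" E]
      by (cases "norm (Q c) < P c") (auto simp: model_def \<epsilon>_def)
  qed
  then show ?thesis using d by blast
qed

lemma grad_inner_model_pos:
  assumes "c \<in> primaries \<union> crit" and "c \<in> crit \<Longrightarrow> P c \<noteq> norm (Q c)"
  shows "\<exists>\<rho>>0. \<forall>y. 0 < norm (y - c) \<and> norm (y - c) < \<rho> \<longrightarrow> y \<notin> primaries \<and> grad y \<bullet> model c y > 0"
proof (cases "c \<in> primaries")
  case True
  then obtain j where "j < n" "c = b j" unfolding primaries_def by auto
  with grad_inner_near_primary[OF this(1)] True show ?thesis by (simp add: model_def)
next
  case False
  then show ?thesis using assms grad_inner_model_near_critical by blast
qed

lemma norm_singular_less_far_radius:
  assumes "c \<in> primaries \<union> crit"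
  shows "norm c < far_radius"
proof (cases "c \<in> primaries")
  case True
  then obtain j where "j < n" "c = b j" unfolding primaries_def by auto
  then show ?thesis using norm_primary_le total_mass_nonneg unfolding far_radius_def by fastforce
next
  case False
  then show ?thesis using assms grad_inner_self_pos_far[of c] by (force simp: crit_def)
qed

end

section \<open>Existence of a global minimum\<close>

context satellite
begin

text \<open>Since \<alpha> \<ge> 1, phi decreases at least like -ln near 0 and at most linearly at infinity.\<close>

lemma phi_ge_minus_ln:
  assumes "0 < r" "r \<le> 1"
  shows "phi r \<ge> phi 1 - ln r"
proof -
  have "(\<lambda>s. phi s + ln s) 1 \<le> (\<lambda>s. phi s + ln s) r"
  proof (rule DERIV_nonpos_imp_nonincreasing[OF assms(2)])
    fix x assume x: "r \<le> x" "x \<le> 1"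
    then have x0: "x > 0" using assms by simp
    have "((\<lambda>s. phi s + ln s) has_real_derivative (- 1 / x powr \<alpha> + 1 / x)) (at x)"
      using phi_deriv[OF x0] x0 by (auto intro!: derivative_eq_intros)
    moreover have "x powr \<alpha> \<le> x" using powr_le_one_le[OF x0 x(2)] alpha by simp
    then have "1 / x \<le> 1 / x powr \<alpha>" using x0 by (intro divide_left_mono) auto
    ultimately show "\<exists>y. ((\<lambda>s. phi s + ln s) has_real_derivative y) (at x) \<and> y \<le> 0" by force
  qed
  then show ?thesis by simp
qed

lemma phi_ge_minus_id:
  assumes "0 < r"
  shows "phi r \<ge> phi 1 - r"
proof (cases "r \<le> 1")
  case True
  then show ?thesis using phi_ge_minus_ln[OF assms] ln_le_minus_one[OF assms] by linarith
next
  case False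
  then have "1 \<le> r" by simp
  then have "(\<lambda>s. phi s + s) 1 \<le> (\<lambda>s. phi s + s) r"
  proof (rule DERIV_nonneg_imp_nondecreasing)
    fix x assume x: "1 \<le> x" "x \<le> r"
    then have x0: "x > 0" by simp
    have "((\<lambda>s. phi s + s) has_real_derivative (- 1 / x powr \<alpha> + 1)) (at x)"
      using phi_deriv[OF x0] x0 by (auto intro!: derivative_eq_intros)
    moreover have "x powr \<alpha> \<ge> 1" using ge_one_powr_ge_zero[OF x(1)] alpha by simp
    then have "1 / x powr \<alpha> \<le> 1 / 1" by (intro divide_left_mono) auto
    ultimately show "\<exists>y. ((\<lambda>s. phi s + s) has_real_derivative y) (at x) \<and> y \<ge> 0" by force
  qed
  then show ?thesis by simp
qed

definition pot_floor :: "complex \<Rightarrow> real" where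
  "pot_floor z = (norm z)^2/2 + phi 1 * total_mass - total_mass * norm z - (\<Sum>j<n. m j * norm (b j))"

text \<open>pot z = |z|^2/2 + \<Sum>j m j (phi 1 - r j) + \<Sum>j m j (phi (r j) - phi 1 + r j) with r j = |z - b j|;
  the middle sum is at least pot_floor z - |z|^2/2 and the summands of the last are nonnegative.\<close>

lemma phi_excess_nonneg:
  assumes "z \<notin> primaries" "j < n"
  shows "0 \<le> m j * (phi (norm (z - b j)) - phi 1 + norm (z - b j))"
  using mass_pos[OF assms(2)] phi_ge_minus_id[of "norm (z - b j)"] ne_primary[OF assms] by simp

lemma pot_ge_floor_plus:
  assumes z: "z \<notin> primaries"
  shows "pot z \<ge> pot_floor z + (\<Sum>j<n. m j * (phi (norm (z - b j)) - phi 1 + norm (z - b j)))"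
proof -
  have "m j * (phi 1 - norm z - norm (b j)) \<le> m j * (phi 1 - norm (z - b j))" if "j < n" for j
    using mass_pos[OF that] norm_triangle_ineq4[of z "b j"] by (intro mult_left_mono) auto
  then have "(\<Sum>j<n. m j * (phi 1 - norm z - norm (b j))) \<le> (\<Sum>j<n. m j * (phi 1 - norm (z - b j)))"
    by (intro sum_mono) auto
  moreover have "(\<Sum>j<n. m j * (phi 1 - norm z - norm (b j))) = pot_floor z - (norm z)^2/2"
    unfolding pot_floor_def total_mass_def
    by (simp add: algebra_simps sum_subtractf sum_distrib_left sum_distrib_right sum.distrib)
  moreover have "pot z = (norm z)^2/2 + (\<Sum>j<n. m j * (phi 1 - norm (z - b j)))
      + (\<Sum>j<n. m j * (phi (norm (z - b j)) - phi 1 + norm (z - b j)))"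
    unfolding pot_def by (simp add: sum.distrib[symmetric] algebra_simps)
  ultimately show ?thesis by linarith
qed

lemma pot_ge_floor:
  assumes "z \<notin> primaries"
  shows "pot z \<ge> pot_floor z"
proof -
  have "0 \<le> (\<Sum>j<n. m j * (phi (norm (z - b j)) - phi 1 + norm (z - b j)))"
    using phi_excess_nonneg[OF assms] by (intro sum_nonneg) auto
  then show ?thesis using pot_ge_floor_plus[OF assms] by linarith
qed

lemma pot_ge_floor_near_primary:
  assumes z: "z \<notin> primaries" and j: "j < n" and r: "norm (z - b j) \<le> 1"
  shows "pot z \<ge> pot_floor z - m j * ln (norm (z - b j))"
proof -
  have r0: "norm (z - b j) > 0" using ne_primary[OF z j] by simp
  then have "- ln (norm (z - b j)) \<le> phi (norm (z - b j)) - phi 1 + norm (z - b j)"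
    using phi_ge_minus_ln[OF r0 r] by linarith
  then have "m j * (- ln (norm (z - b j))) \<le> m j * (phi (norm (z - b j)) - phi 1 + norm (z - b j))"
    using mass_pos[OF j] by (intro mult_left_mono) auto
  also have "\<dots> \<le> (\<Sum>k<n. m k * (phi (norm (z - b k)) - phi 1 + norm (z - b k)))"
    using phi_excess_nonneg[OF z] j by (intro member_le_sum) auto
  finally show ?thesis using pot_ge_floor_plus[OF z] by simp
qed

lemma pot_large_far: "\<exists>R. \<forall>y. y \<notin> primaries \<longrightarrow> norm y > R \<longrightarrow> pot y > c"
proof -
  define X where "X = c - phi 1 * total_mass + (\<Sum>j<n. m j * norm (b j))"
  define R where "R = 2 * total_mass + \<bar>X\<bar> + 2"
  have "pot y > c" if y: "y \<notin> primaries" "norm y > R" for y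
  proof -
    have "norm y * (norm y / 2 - total_mass) \<ge> (\<bar>X\<bar> + 2) * 1"
      using y total_mass_nonneg by (intro mult_mono) (auto simp: R_def field_simps)
    then have "(norm y)^2/2 - total_mass * norm y > X" by (simp add: power2_eq_square algebra_simps)
    then show ?thesis using pot_ge_floor[OF y(1)] by (simp add: X_def pot_floor_def)
  qed
  then show ?thesis by blast
qed

lemma pot_large_near_primary:
  assumes j: "j < n"
  shows "\<exists>\<delta>>0. \<forall>y. y \<notin> primaries \<longrightarrow> norm (y - b j) < \<delta> \<longrightarrow> pot y > c"
proof -
  define K where "K = (\<Sum>j<n. norm (b j))"
  define Y where "Y = (c - phi 1 * total_mass + (\<Sum>j<n. m j * norm (b j)) + total_mass * (K + 1)) / m j"
  define \<delta> where "\<delta> = exp (- (\<bar>Y\<bar> + 1))"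
  have mj: "m j > 0" using mass_pos j by simp
  have "pot y > c" if y: "y \<notin> primaries" and d: "norm (y - b j) < \<delta>" for y
  proof -
    define r where "r = norm (y - b j)"
    have "\<delta> < 1" unfolding \<delta>_def using abs_ge_zero[of Y] by simp
    then have r: "0 < r" "r < 1" using ne_primary[OF y j] d by (auto simp: r_def)
    have "norm y \<le> K + 1"
      using norm_triangle_ineq2[of y "b j"] norm_primary_le[OF j] r unfolding r_def K_def by linarith
    then have tm: "total_mass * norm y \<le> total_mass * (K + 1)"
      using total_mass_nonneg by (simp add: mult_left_mono)
    have "ln r < ln \<delta>"
      using r d exp_gt_zero[of "- (\<bar>Y\<bar> + 1)"] unfolding \<delta>_def[symmetric] by (simp add: r_def)
    then have "ln r < - (\<bar>Y\<bar> + 1)" by (simp add: \<delta>_def)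
    then have "m j * (\<bar>Y\<bar> + 1) < m j * (- ln r)" using mj by (intro mult_strict_left_mono) auto
    moreover have "m j * Y \<le> m j * \<bar>Y\<bar>" using mj by (simp add: mult_left_mono)
    ultimately have big: "- (m j * ln r) > m j * Y + m j" by (simp add: algebra_simps)
    have mY: "m j * Y = c - phi 1 * total_mass + (\<Sum>j<n. m j * norm (b j)) + total_mass * (K + 1)"
      using mj by (simp add: Y_def)
    have "pot y \<ge> pot_floor y - m j * ln r"
      using pot_ge_floor_near_primary[OF y j] r unfolding r_def by simp
    moreover have "(norm y)^2 / 2 \<ge> 0" by simp
    ultimately show ?thesis using tm big mY mj unfolding pot_floor_def by linarith
  qed
  moreover have "\<delta> > 0" by (simp add: \<delta>_def)
  ultimately show ?thesis by blast
qed

text \<open>pot is continuous off the primaries and tends to +\<infinity> at the primaries and at infinity,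
  so it attains its minimum on a compact set obtained by cutting out small discs and a
  neighbourhood of infinity.\<close>

theorem pot_has_global_min: "\<exists>x. x \<notin> primaries \<and> (\<forall>y. y \<notin> primaries \<longrightarrow> pot x \<le> pot y)"
proof -
  obtain w0 where w0: "w0 \<notin> primaries"
    using ex_new_if_finite[OF infinite_UNIV_char_0 finite_primaries] by blast
  obtain R where R: "\<forall>y. y \<notin> primaries \<longrightarrow> norm y > R \<longrightarrow> pot y > pot w0"
    using pot_large_far by blast
  have "\<forall>j\<in>{..<n}. \<exists>d>0. \<forall>y. y \<notin> primaries \<longrightarrow> norm (y - b j) < d \<longrightarrow> pot y > pot w0"
    using pot_large_near_primary by blast
  then obtain \<delta> where \<delta>: "\<forall>j\<in>{..<n}. \<delta> j > 0 \<and>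
      (\<forall>y. y \<notin> primaries \<longrightarrow> norm (y - b j) < \<delta> j \<longrightarrow> pot y > pot w0)"
    by (metis (no_types, lifting) bchoice)
  define K where "K = cball 0 R - (\<Union>j<n. ball (b j) (\<delta> j))"
  have "compact K" unfolding K_def by (intro compact_diff) auto
  have KB: "K \<subseteq> - primaries" using \<delta> unfolding K_def primaries_def by force
  have outside: "pot y > pot w0" if "y \<notin> primaries" "y \<notin> K" for y
    using that R \<delta> unfolding K_def by (auto simp: dist_norm norm_minus_commute)
  then have "w0 \<in> K" using w0 by force
  moreover have "continuous_on K pot" using pot_continuous_on KB by (rule continuous_on_subset)
  ultimately obtain x where x: "x \<in> K" "\<forall>y\<in>K. pot x \<le> pot y"
    using continuous_attains_inf[OF \<open>compact K\<close>] by blast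
  have "pot x \<le> pot y" if "y \<notin> primaries" for y
    using x \<open>w0 \<in> K\<close> outside[OF that] by force
  then show ?thesis using x KB by blast
qed

lemma hess_degenerate_if_P_eq_Q:
  assumes "P z = norm (Q z)"
  shows "\<exists>v. v \<noteq> 0 \<and> hess z v = 0"
proof -
  have p: "P z > 0" using P_ge_1[of z] by simp
  define v where "v = csqrt (- Q z / of_real (P z))"
  have nv: "norm v = 1" using assms p by (simp add: v_def norm_divide)
  have "Q z * cnj v = - of_real (P z) * v^2 * cnj v" using p by (simp add: v_def field_simps)
  also have "\<dots> = - of_real (P z) * v * (v * cnj v)" by (simp add: power2_eq_square algebra_simps)
  also have "v * cnj v = 1" using nv complex_norm_square[of v] by simp
  finally have "hess z v = 0" unfolding hess_def by simp
  moreover have "v \<noteq> 0" using nv by auto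
  ultimately show ?thesis by blast
qed

end

section \<open>Counting the critical points\<close>

locale morse_satellite = satellite +
  assumes nondegenerate: "\<And>z. z \<in> crit \<Longrightarrow> P z \<noteq> norm (Q z)"
begin

lemma not_islimpt_crit:
  assumes "y \<notin> primaries"
  shows "\<not> y islimpt crit"
proof (cases "y \<in> crit")
  case True
  obtain \<rho> where "\<rho> > 0" "\<forall>x. 0 < norm (x - y) \<and> norm (x - y) < \<rho> \<longrightarrow> grad x \<bullet> model y x > 0"
    using grad_inner_model_pos[of y] True nondegenerate by blast
  then show ?thesis unfolding islimpt_approachable
    by (auto simp: crit_def dist_norm intro!: exI[of _ \<rho>])
next
  case False
  then have "grad y \<noteq> 0" using assms by (simp add: crit_def)
  then obtain e where e: "e > 0" "\<forall>x. dist x y < e \<longrightarrow> dist (grad x) (grad y) < norm (grad y)"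
    using grad_continuous_at[OF assms] unfolding continuous_at_eps_delta by (meson zero_less_norm_iff)
  then have "grad x \<noteq> 0" if "dist x y < e" for x using that by fastforce
  then show ?thesis unfolding islimpt_approachable using e by (auto simp: crit_def intro!: exI[of _ e])
qed

lemma finite_crit: "finite crit"
proof -
  have "\<forall>j\<in>{..<n}. \<exists>\<rho>>0. \<forall>z. 0 < norm (z - b j) \<and> norm (z - b j) < \<rho> \<longrightarrow>
      z \<notin> primaries \<and> grad z \<bullet> (b j - z) > 0"
    using grad_inner_near_primary by blast
  then obtain \<rho> where \<rho>: "\<forall>j\<in>{..<n}. \<rho> j > 0 \<and> (\<forall>z. 0 < norm (z - b j) \<and> norm (z - b j) < \<rho> j
      \<longrightarrow> z \<notin> primaries \<and> grad z \<bullet> (b j - z) > 0)"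
    by (metis (no_types, lifting) bchoice)
  define K where "K = cball 0 far_radius - (\<Union>j<n. ball (b j) (\<rho> j))"
  have "compact K" unfolding K_def by (intro compact_diff) auto
  moreover have "K \<inter> primaries = {}" using \<rho> unfolding K_def primaries_def by force
  moreover have "crit \<subseteq> K"
  proof
    fix z assume z: "z \<in> crit"
    then have "norm z \<le> far_radius" using norm_singular_less_far_radius[of z] by auto
    moreover have "z \<notin> ball (b j) (\<rho> j)" if j: "j < n" for j
    proof
      assume "z \<in> ball (b j) (\<rho> j)"
      then have "0 < norm (z - b j)" "norm (z - b j) < \<rho> j"
        using z j ne_primary[of z j] by (auto simp: crit_def dist_norm norm_minus_commute)
      then have "grad z \<bullet> (b j - z) > 0" using \<rho> j by blast
      then show False using z by (simp add: crit_def)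
    qed
    ultimately show "z \<in> K" unfolding K_def by auto
  qed
  moreover have "finite (K \<inter> crit)"
    using calculation not_islimpt_crit by (intro finite_not_islimpt_in_compact) blast+
  ultimately show ?thesis by (simp add: Int_absorb1)
qed

sublocale grad_field: planar_field grad "primaries \<union> crit"
proof
  show "finite (primaries \<union> crit)" using finite_primaries finite_crit by simp
  show "continuous_on (- (primaries \<union> crit)) grad"
    using grad_continuous_on by (rule continuous_on_subset) blast
qed (auto simp: crit_def)

lemma rect_wind_around_singular:
  assumes "c \<in> box u w" "cbox u w \<inter> (primaries \<union> crit) = {c}"
  shows "grad_field.rect_wind u w = index c"
proof -
  have c: "c \<in> primaries \<union> crit" using assms(2) by blast
  then have nd: "c \<notin> primaries \<Longrightarrow> P c \<noteq> norm (Q c)" using nondegenerate by blast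
  obtain \<rho> where "\<rho> > 0" "\<forall>y. 0 < norm (y - c) \<and> norm (y - c) < \<rho> \<longrightarrow> grad y \<bullet> model c y > 0"
    using grad_inner_model_pos[OF c] nondegenerate by blast
  then have "grad_field.rect_wind u w = winding_number (model c \<circ> rectpath u w) 0"
    using assms continuous_model model_nonzero[OF _ nd] by (intro grad_field.rect_wind_local_model) auto
  also have "\<dots> = index c" using winding_number_model[OF assms(1) nd] .
  finally show ?thesis .
qed

text \<open>On a large square, grad makes an acute angle with the identity, so it winds once.\<close>

theorem sum_index_eq_1: "(\<Sum>c\<in>primaries \<union> crit. index c) = 1"
proof -
  define R where "R = far_radius + 1"
  define u w where "u = Complex (-R) (-R)" and "w = Complex R R"
  have R: "R > 1"
    using total_mass_nonneg sum_nonneg[of "{..<n}" "\<lambda>j. norm (b j)"] by (simp add: R_def far_radius_def)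
  have inbox: "c \<in> box u w" if "norm c < R" for c
    using that abs_Re_le_cmod[of c] abs_Im_le_cmod[of c]
    by (auto simp: u_def w_def in_box_complex_iff abs_less_iff)
  have S: "primaries \<union> crit \<subseteq> box u w"
    using norm_singular_less_far_radius inbox by (force simp: R_def)
  have lt: "Re u < Re w" "Im u < Im w" using R by (auto simp: u_def w_def)
  have "grad_field.rect_wind u w = (\<Sum>c\<in>(primaries \<union> crit) \<inter> box u w. index c)"
    using S box_subset_cbox lt by (intro grad_field.rect_wind_eq_sum rect_wind_around_singular) auto
  moreover have "grad_field.rect_wind u w = 1"
  proof -
    have far: "grad z \<bullet> z > 0" if "z \<in> path_image (rectpath u w)" for z
    proof -
      have "z \<in> cbox u w - box u w" using that path_image_rectpath_cbox_minus_box[of u w] lt by simp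
      then have "\<bar>Re z\<bar> = R \<or> \<bar>Im z\<bar> = R"
        by (auto simp: u_def w_def in_box_complex_iff in_cbox_complex_iff)
      then have "norm z \<ge> far_radius" using abs_Re_le_cmod[of z] abs_Im_le_cmod[of z] R_def by auto
      then show ?thesis using grad_inner_self_pos_far by blast
    qed
    have "path_image (rectpath u w) \<inter> (primaries \<union> crit) = {}"
      using S path_image_rectpath_cbox_minus_box[of u w] lt by auto
    then have "winding_number (grad \<circ> rectpath u w) 0 = winding_number (rectpath u w) 0"
      using grad_field.path_compose_off_S[OF path_rectpath] far
      by (intro winding_number_loops_linear_eq)
        (auto simp: pathfinish_compose pathstart_compose path_image_def inner_commute
          intro!: zero_notin_segment_if_inner_pos)
    also have "\<dots> = 1" using R by (intro winding_number_rectpath) (auto simp: u_def w_def in_box_complex_iff)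
    finally show ?thesis unfolding grad_field.rect_wind_def .
  qed
  ultimately show ?thesis using S by (simp add: Int_absorb2)
qed

definition crit_min :: "complex set" where
  "crit_min = {z\<in>crit. norm (Q z) < P z}"

definition crit_saddle :: "complex set" where
  "crit_saddle = {z\<in>crit. P z < norm (Q z)}"

lemma finite_crit_min: "finite crit_min" and finite_crit_saddle: "finite crit_saddle"
  using finite_crit by (simp_all add: crit_min_def crit_saddle_def)

theorem card_crit_saddle: "card crit_saddle + 1 = n + card crit_min"
proof -
  have split: "primaries \<union> crit = primaries \<union> (crit_min \<union> crit_saddle)"
    using nondegenerate by (force simp: crit_min_def crit_saddle_def)
  have "(1::complex) = (\<Sum>c\<in>primaries \<union> (crit_min \<union> crit_saddle). index c)"
    using sum_index_eq_1 unfolding split by simp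
  also have "\<dots> = (\<Sum>c\<in>primaries. index c) + ((\<Sum>c\<in>crit_min. index c) + (\<Sum>c\<in>crit_saddle. index c))"
  proof -
    have "primaries \<inter> (crit_min \<union> crit_saddle) = {}" "crit_min \<inter> crit_saddle = {}"
      by (auto simp: crit_min_def crit_saddle_def crit_def)
    then show ?thesis using finite_primaries finite_crit_min finite_crit_saddle
      by (simp add: sum.union_disjoint)
  qed
  also have "\<dots> = of_nat n + (of_nat (card crit_min) - of_nat (card crit_saddle))"
    by (simp add: index_def card_primaries crit_min_def crit_saddle_def crit_def)
  finally have "(of_nat (card crit_saddle + 1) :: complex) = of_nat (n + card crit_min)"
    by (simp add: algebra_simps)
  then show ?thesis using of_nat_eq_iff by blast
qed

lemma loc_min_iff_crit_min: "loc_min z \<longleftrightarrow> z \<in> crit_min"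
proof
  assume l: "loc_min z"
  then have z: "z \<notin> primaries" "grad z = 0" using loc_min_imp_critical by (auto simp: loc_min_def)
  then have "z \<in> crit" by (simp add: crit_def)
  moreover have "\<not> P z < norm (Q z)" using not_loc_min_if_P_less_Q[OF z] l by blast
  ultimately show "z \<in> crit_min" using nondegenerate by (force simp: crit_min_def)
next
  assume "z \<in> crit_min"
  then show "loc_min z" using loc_min_if_P_greater_Q by (auto simp: crit_min_def crit_def)
qed

lemma saddle_iff_crit_saddle:
  "z \<in> crit \<and> \<not> loc_min z \<and> \<not> loc_max z \<longleftrightarrow> z \<in> crit_saddle"
  using loc_min_iff_crit_min no_loc_max nondegenerate
  by (force simp: crit_min_def crit_saddle_def)

lemma crit_min_nonempty: "crit_min \<noteq> {}"
proof -
  obtain z where "z \<notin> primaries" "\<forall>y. y \<notin> primaries \<longrightarrow> pot z \<le> pot y"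
    using pot_has_global_min by blast
  then have "loc_min z" unfolding loc_min_def by (auto intro!: exI[of _ 1])
  then show ?thesis using loc_min_iff_crit_min by blast
qed

end

section \<open>Back to the plane real^2\<close>

definition cplx :: "real^2 \<Rightarrow> complex" where
  "cplx x = Complex (x$1) (x$2)"

definition vec2 :: "complex \<Rightarrow> real^2" where
  "vec2 z = vector [Re z, Im z]"

lemma cplx_vec2 [simp]: "cplx (vec2 z) = z"
  by (simp add: cplx_def vec2_def complex_eq_iff)

lemma vec2_cplx [simp]: "vec2 (cplx x) = x"
  by (simp add: cplx_def vec2_def vec_eq_iff forall_2)

lemma cplx_eq_iff: "cplx x = cplx y \<longleftrightarrow> x = y"
  by (metis vec2_cplx)

lemma bij_cplx: "bij cplx"
  by (metis bij_betw_def cplx_vec2 vec2_cplx inj_def surj_def)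

lemma cplx_diff: "cplx (x - y) = cplx x - cplx y"
  by (simp add: cplx_def complex_eq_iff)

lemma inner_cplx: "cplx x \<bullet> cplx y = x \<bullet> y"
  by (simp add: cplx_def inner_vec_def sum_2 inner_complex_def)

lemma norm_cplx: "norm (cplx x) = norm x"
  by (simp add: norm_eq_sqrt_inner inner_cplx)

lemma dist_cplx: "dist (cplx x) (cplx y) = dist x y"
  by (simp add: dist_norm norm_cplx flip: cplx_diff)

lemma vec2_zero [simp]: "vec2 0 = 0"
  by (simp add: vec2_def vec_eq_iff forall_2)

lemma bounded_linear_cplx: "bounded_linear cplx"
  by (rule bounded_linear_intro[of _ 1]) (auto simp: norm_cplx, auto simp: cplx_def complex_eq_iff)

lemma bounded_linear_vec2: "bounded_linear vec2"
proof -
  interpret bounded_linear cplx by (rule bounded_linear_cplx)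
  show ?thesis
    by (rule bounded_linear_intro[of _ 1]) (metis add cplx_eq_iff cplx_vec2 scaleR norm_cplx order_refl mult_1_right)+
qed

context satellite
begin

context
  fixes a :: "nat \<Rightarrow> real^2"
  assumes b_eq: "\<And>j. b j = cplx (a j)"
begin

lemma planar_potential_eq: "planar_potential phi n m a = pot \<circ> cplx"
  unfolding planar_potential_def pot_def by (simp add: fun_eq_iff b_eq norm_cplx flip: cplx_diff)

lemma mem_primaries_domain_iff: "x \<in> primaries_domain n a \<longleftrightarrow> cplx x \<notin> primaries"
  unfolding primaries_domain_def primaries_def by (auto simp: b_eq cplx_eq_iff)

lemma planar_potential_has_derivative:
  assumes "cplx x \<notin> primaries"
  shows "(planar_potential phi n m a has_derivative (\<lambda>h. vec2 (grad (cplx x)) \<bullet> h)) (at x)"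
proof -
  have "((pot \<circ> cplx) has_derivative (\<lambda>h. grad (cplx x) \<bullet> cplx h)) (at x)"
    using has_derivative_compose[OF bounded_linear_imp_has_derivative[OF bounded_linear_cplx]
        pot_has_derivative[OF assms]]
    by (simp add: o_def)
  moreover have "grad (cplx x) \<bullet> cplx h = vec2 (grad (cplx x)) \<bullet> h" for h
    by (metis inner_cplx cplx_vec2)
  ultimately show ?thesis by (simp add: planar_potential_eq)
qed

lemma critical_point_iff:
  "critical_point (planar_potential phi n m a) (primaries_domain n a) x \<longleftrightarrow> cplx x \<in> crit"
proof
  assume c: "critical_point (planar_potential phi n m a) (primaries_domain n a) x"
  then have x: "cplx x \<notin> primaries" by (simp add: critical_point_def mem_primaries_domain_iff)
  have "(\<lambda>h. vec2 (grad (cplx x)) \<bullet> h) = (\<lambda>h. 0)"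
    using has_derivative_unique[OF planar_potential_has_derivative[OF x]] c
    by (simp add: critical_point_def)
  then have "vec2 (grad (cplx x)) \<bullet> vec2 (grad (cplx x)) = 0" by metis
  then have "grad (cplx x) = 0" by (metis cplx_vec2 inner_eq_zero_iff vec2_zero)
  then show "cplx x \<in> crit" using x by (simp add: crit_def)
next
  assume "cplx x \<in> crit"
  then show "critical_point (planar_potential phi n m a) (primaries_domain n a) x"
    using planar_potential_has_derivative[of x]
    by (simp add: critical_point_def crit_def mem_primaries_domain_iff)
qed

lemma ball_primaries_domain_iff:
  "(\<forall>y\<in>primaries_domain n a. dist y x < e \<longrightarrow> R (pot (cplx y)))
     \<longleftrightarrow> (\<forall>z\<in>- primaries. dist z (cplx x) < e \<longrightarrow> R (pot z))"
proof
  assume *: "\<forall>y\<in>primaries_domain n a. dist y x < e \<longrightarrow> R (pot (cplx y))"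
  show "\<forall>z\<in>- primaries. dist z (cplx x) < e \<longrightarrow> R (pot z)"
  proof (intro ballI impI)
    fix z assume "z \<in> - primaries" "dist z (cplx x) < e"
    then show "R (pot z)" using *[rule_format, of "vec2 z"] dist_cplx[of "vec2 z" x]
      by (simp add: mem_primaries_domain_iff)
  qed
qed (simp add: mem_primaries_domain_iff dist_cplx)

lemma local_min_point_iff:
  "local_min_point (planar_potential phi n m a) (primaries_domain n a) x \<longleftrightarrow> loc_min (cplx x)"
  using ball_primaries_domain_iff[where R = "\<lambda>t. pot (cplx x) \<le> t"]
  unfolding local_min_point_def loc_min_def planar_potential_eq o_def
  by (simp add: mem_primaries_domain_iff)

lemma local_max_point_iff:
  "local_max_point (planar_potential phi n m a) (primaries_domain n a) x \<longleftrightarrow> loc_max (cplx x)"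
  using ball_primaries_domain_iff[where R = "\<lambda>t. t \<le> pot (cplx x)"]
  unfolding local_max_point_def loc_max_def planar_potential_eq o_def
  by (simp add: mem_primaries_domain_iff)

text \<open>The gradient field of a nondegenerate critical point must agree with vec2 \<circ> grad \<circ> cplx
  near it, so its derivative is the Hessian, which is singular when P = |Q|.\<close>

lemma nondegenerate_imp_P_ne_Q:
  assumes "nondegenerate_critical_point (planar_potential phi n m a) (primaries_domain n a) x"
  shows "P (cplx x) \<noteq> norm (Q (cplx x))"
proof
  assume eq: "P (cplx x) = norm (Q (cplx x))"
  obtain U g H where U: "open U" "x \<in> U" "U \<subseteq> primaries_domain n a"
    and gd: "\<forall>y\<in>U. (planar_potential phi n m a has_derivative (\<lambda>h. g y \<bullet> h)) (at y)"
    and gH: "(g has_derivative H) (at x)" and inj: "\<forall>h. H h = 0 \<longrightarrow> h = 0"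
    using assms unfolding nondegenerate_critical_point_def by blast
  have g: "g y = vec2 (grad (cplx y))" if y: "y \<in> U" for y
  proof -
    have "cplx y \<notin> primaries" using U y mem_primaries_domain_iff by blast
    from has_derivative_unique[OF gd[rule_format, OF y] planar_potential_has_derivative[OF this]]
    have "(g y - vec2 (grad (cplx y))) \<bullet> (g y - vec2 (grad (cplx y))) = 0"
      by (metis (no_types, lifting) inner_diff_left right_minus_eq)
    then show ?thesis by simp
  qed
  have x: "cplx x \<notin> primaries" using U mem_primaries_domain_iff by blast
  have "((vec2 \<circ> grad \<circ> cplx) has_derivative (vec2 \<circ> hess (cplx x) \<circ> cplx)) (at x)"
    using bounded_linear_imp_has_derivative[OF bounded_linear_cplx]
      grad_has_derivative[OF x] bounded_linear_imp_has_derivative[OF bounded_linear_vec2]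
    by (auto intro!: diff_chain_at)
  moreover have "((vec2 \<circ> grad \<circ> cplx) has_derivative H) (at x)"
    by (rule has_derivative_transform_within_open[OF gH U(1,2)]) (simp add: g)
  ultimately have H: "vec2 \<circ> hess (cplx x) \<circ> cplx = H" by (rule has_derivative_unique)
  obtain v where v: "v \<noteq> 0" "hess (cplx x) v = 0" using hess_degenerate_if_P_eq_Q[OF eq] by blast
  then have "H (vec2 v) = 0" by (simp flip: H)
  then show False using inj v(1) by (metis cplx_vec2 vec2_zero)
qed

lemma saddle_point_iff:
  "saddle_point (planar_potential phi n m a) (primaries_domain n a) x
     \<longleftrightarrow> cplx x \<in> crit \<and> \<not> loc_min (cplx x) \<and> \<not> loc_max (cplx x)"
  unfolding saddle_point_def critical_point_iff local_min_point_iff local_max_point_iff ..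

lemma exists_global_min_point:
  "\<exists>x. global_min_point (planar_potential phi n m a) (primaries_domain n a) x"
proof -
  obtain z where "z \<notin> primaries" "\<forall>y. y \<notin> primaries \<longrightarrow> pot z \<le> pot y"
    using pot_has_global_min by blast
  then have "global_min_point (planar_potential phi n m a) (primaries_domain n a) (vec2 z)"
    unfolding global_min_point_def by (simp add: mem_primaries_domain_iff planar_potential_eq)
  then show ?thesis ..
qed

lemma morse_satellite_if_is_morse_on:
  assumes "is_morse_on (planar_potential phi n m a) (primaries_domain n a)"
  shows "morse_satellite \<alpha> n m b phi"
proof
  fix z assume "z \<in> crit"
  then have "critical_point (planar_potential phi n m a) (primaries_domain n a) (vec2 z)"
    by (simp add: critical_point_iff)
  with assms nondegenerate_imp_P_ne_Q[of "vec2 z"] show "P z \<noteq> norm (Q z)"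
    by (simp add: is_morse_on_def)
qed

end

end

lemma card_vimage_cplx: "card (cplx -` A) = card A" and finite_vimage_cplx: "finite (cplx -` A) \<longleftrightarrow> finite A"
  using bij_cplx by (simp_all add: bij_def card_vimage_inj finite_vimage_iff)

theorem mainTheorem1:
  fixes \<alpha> :: real and n :: nat and a :: "nat \<Rightarrow> real^2" and m :: "nat \<Rightarrow> real"
    and phi :: "real \<Rightarrow> real"
  assumes alpha: "\<alpha> \<ge> 1"
    and n: "n \<ge> 1"
    and distinct: "inj_on a {..<n}"
    and masses: "\<forall>i<n. m i > 0"
    and releq: "relative_equilibrium \<alpha> n m a"
    and phi_deriv: "\<forall>r>0. (phi has_real_derivative (- 1 / r powr \<alpha>)) (at r)"
  defines "V \<equiv> planar_potential phi n m a"
    and "S \<equiv> primaries_domain n a"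
  shows "(\<nexists>x. local_max_point V S x)
       \<and> (\<exists>x. global_min_point V S x)
       \<and> (is_morse_on V S \<longrightarrow>
            finite {x. saddle_point V S x} \<and> finite {x. local_min_point V S x}
          \<and> card {x. saddle_point V S x} = n - 1 + card {x. local_min_point V S x}
          \<and> card {x. saddle_point V S x} \<ge> n)"
proof -
  interpret satellite \<alpha> n m "cplx \<circ> a" phi
    using alpha masses distinct phi_deriv by unfold_locales (auto simp: inj_on_def cplx_eq_iff)
  have b: "\<And>j. (cplx \<circ> a) j = cplx (a j)" by simp
  have "\<nexists>x. local_max_point V S x"
    unfolding V_def S_def local_max_point_iff[OF b] using no_loc_max by blast
  moreover have "\<exists>x. global_min_point V S x"
    unfolding V_def S_def by (rule exists_global_min_point[OF b])
  moreover have "finite {x. saddle_point V S x} \<and> finite {x. local_min_point V S x}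
      \<and> card {x. saddle_point V S x} = n - 1 + card {x. local_min_point V S x}
      \<and> card {x. saddle_point V S x} \<ge> n" if "is_morse_on V S"
  proof -
    interpret morse_satellite \<alpha> n m "cplx \<circ> a" phi
      using morse_satellite_if_is_morse_on[OF b] that by (simp add: V_def S_def)
    have "{x. saddle_point V S x} = cplx -` crit_saddle" "{x. local_min_point V S x} = cplx -` crit_min"
      unfolding V_def S_def saddle_point_iff[OF b] local_min_point_iff[OF b]
      using saddle_iff_crit_saddle loc_min_iff_crit_min by auto
    moreover have "card crit_min > 0" using crit_min_nonempty finite_crit_min by (simp add: card_gt_0_iff)
    ultimately show ?thesis
      using card_crit_saddle finite_crit_min finite_crit_saddle n
      by (simp add: card_vimage_cplx finite_vimage_cplx)
  qed
  ultimately show ?thesis by blast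
qed

end
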